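(* Let $\theta$ be a homogeneous polynomial of degree $m\ge 1$ on $\mathbb C^N$ with coefficients in $[\mathcal U,\mathcal Y]$, not identically zero. Then there exist separable Hilbert spaces $\mathcal Y^{(0)}=\mathcal Y,\mathcal Y^{(1)},\dots,\mathcal Y^{(m)}=\mathcal U$ and operators $L^{(j)}_k\in[\mathcal Y^{(j)},\mathcal Y^{(j-1)}]$ ($j=1,\dots,m$, $k=1,\dots,N$) such that $\theta(z)=z\mathbf L^{(1)}\cdots z\mathbf L^{(m)}$ for all $z\in\mathbb C^N$. Moreover, if $m>1$ and $\alpha=(N;\mathbf A,\mathbf B,\mathbf C,\mathbf D;\mathcal X,\mathcal U,\mathcal Y)$ is any $N$-parametric system whose transfer function coincides with $\theta$ on a neighbourhood of $0$, then $\theta(z)=z\mathbf C\,(z\mathbf A)^{m-2}\,z\mathbf B$ for all $z\in\mathbb C^N$.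
   Context: For an $N$-tuple $\mathbf T=(T_1,\dots,T_N)$ of operators and $z\in\mathbb C^N$, $z\mathbf T:=\sum_k z_kT_k$. An $N$-parametric system $\alpha=(N;\mathbf A,\mathbf B,\mathbf C,\mathbf D;\mathcal X,\mathcal U,\mathcal Y)$ consists of separable Hilbert spaces $\mathcal X$ (state space), $\mathcal U$ (input space), $\mathcal Y$ (output space) and $N$-tuples of bounded operators $A_k\in[\mathcal X,\mathcal X]$, $B_k\in[\mathcal U,\mathcal X]$, $C_k\in[\mathcal X,\mathcal Y]$, $D_k\in[\mathcal U,\mathcal Y]$, $k=1,\dots,N$. Its transfer function is $\theta_\alpha(z)=z\mathbf D+z\mathbf C(I_{\mathcal X}-z\mathbf A)^{-1}z\mathbf B$, holomorphic on a neighbourhood of $z=0$. *)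

theory Defs
  imports Complex_Main "HOL-Library.Countable_Set"
begin

text \<open>A (complex) Hilbert space is represented as a structure on a carrier set
inside some ambient HOL type: zero, addition, scalar multiplication, inner product.
This allows spaces to be existentially quantified and indexed by natural numbers.\<close>

record 'a hspace =
  hcarrier :: "'a set"
  hzero    :: 'a
  hadd     :: "'a \<Rightarrow> 'a \<Rightarrow> 'a"
  hscale   :: "complex \<Rightarrow> 'a \<Rightarrow> 'a"
  hinner   :: "'a \<Rightarrow> 'a \<Rightarrow> complex"

definition hnorm :: "'a hspace \<Rightarrow> 'a \<Rightarrow> real" where
  "hnorm H x = sqrt (Re (hinner H x x))"

definition hdist :: "'a hspace \<Rightarrow> 'a \<Rightarrow> 'a \<Rightarrow> real" where
  "hdist H x y = hnorm H (hadd H x (hscale H (-1) y))"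

definition is_vector_space :: "'a hspace \<Rightarrow> bool" where
  "is_vector_space H \<longleftrightarrow>
     hzero H \<in> hcarrier H \<and>
     (\<forall>x\<in>hcarrier H. \<forall>y\<in>hcarrier H. hadd H x y \<in> hcarrier H) \<and>
     (\<forall>a. \<forall>x\<in>hcarrier H. hscale H a x \<in> hcarrier H) \<and>
     (\<forall>x\<in>hcarrier H. \<forall>y\<in>hcarrier H. \<forall>w\<in>hcarrier H.
        hadd H (hadd H x y) w = hadd H x (hadd H y w)) \<and>
     (\<forall>x\<in>hcarrier H. \<forall>y\<in>hcarrier H. hadd H x y = hadd H y x) \<and>
     (\<forall>x\<in>hcarrier H. hadd H (hzero H) x = x) \<and>
     (\<forall>x\<in>hcarrier H. hadd H x (hscale H (-1) x) = hzero H) \<and>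
     (\<forall>x\<in>hcarrier H. hscale H 1 x = x) \<and>
     (\<forall>a b. \<forall>x\<in>hcarrier H. hscale H (a * b) x = hscale H a (hscale H b x)) \<and>
     (\<forall>a b. \<forall>x\<in>hcarrier H. hscale H (a + b) x = hadd H (hscale H a x) (hscale H b x)) \<and>
     (\<forall>a. \<forall>x\<in>hcarrier H. \<forall>y\<in>hcarrier H.
        hscale H a (hadd H x y) = hadd H (hscale H a x) (hscale H a y))"

definition is_inner_product :: "'a hspace \<Rightarrow> bool" where
  "is_inner_product H \<longleftrightarrow>
     (\<forall>x\<in>hcarrier H. \<forall>y\<in>hcarrier H. \<forall>w\<in>hcarrier H.
        hinner H (hadd H x y) w = hinner H x w + hinner H y w) \<and>
     (\<forall>a. \<forall>x\<in>hcarrier H. \<forall>w\<in>hcarrier H. hinner H (hscale H a x) w = a * hinner H x w) \<and>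
     (\<forall>x\<in>hcarrier H. \<forall>y\<in>hcarrier H. hinner H y x = cnj (hinner H x y)) \<and>
     (\<forall>x\<in>hcarrier H. 0 \<le> Re (hinner H x x)) \<and>
     (\<forall>x\<in>hcarrier H. hinner H x x = 0 \<longrightarrow> x = hzero H)"

definition is_complete :: "'a hspace \<Rightarrow> bool" where
  "is_complete H \<longleftrightarrow>
     (\<forall>s::nat \<Rightarrow> 'a. (\<forall>n. s n \<in> hcarrier H) \<and>
        (\<forall>e>0. \<exists>M. \<forall>n\<ge>M. \<forall>n'\<ge>M. hdist H (s n) (s n') < e) \<longrightarrow>
        (\<exists>x\<in>hcarrier H. \<forall>e>0. \<exists>M. \<forall>n\<ge>M. hdist H (s n) x < e))"

definition is_separable :: "'a hspace \<Rightarrow> bool" where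
  "is_separable H \<longleftrightarrow>
     (\<exists>D. D \<subseteq> hcarrier H \<and> countable D \<and>
        (\<forall>x\<in>hcarrier H. \<forall>e>0. \<exists>d\<in>D. hdist H x d < e))"

definition sep_hilbert :: "'a hspace \<Rightarrow> bool" where
  "sep_hilbert H \<longleftrightarrow> is_vector_space H \<and> is_inner_product H \<and> is_complete H \<and> is_separable H"

text \<open>Bounded linear operators in [H,K] (as functions, only their values on the carrier matter).\<close>
definition bop :: "'a hspace \<Rightarrow> 'b hspace \<Rightarrow> ('a \<Rightarrow> 'b) \<Rightarrow> bool" where
  "bop H K T \<longleftrightarrow>
     (\<forall>x\<in>hcarrier H. T x \<in> hcarrier K) \<and>
     (\<forall>a b. \<forall>x\<in>hcarrier H. \<forall>y\<in>hcarrier H.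
        T (hadd H (hscale H a x) (hscale H b y)) = hadd K (hscale K a (T x)) (hscale K b (T y))) \<and>
     (\<exists>C. \<forall>x\<in>hcarrier H. hnorm K (T x) \<le> C * hnorm H x)"

definition hsum :: "'a hspace \<Rightarrow> 'a list \<Rightarrow> 'a" where
  "hsum K xs = foldr (hadd K) xs (hzero K)"

text \<open>For an N-tuple T = (T_0,...,T_{N-1}) (indices shifted to 0..N-1) and z in C^N
 (represented as z :: nat \<Rightarrow> complex, only z 0 .. z (N-1) matter): zT = \<Sum>k<N. z k T k.\<close>
definition opc :: "'b hspace \<Rightarrow> nat \<Rightarrow> (nat \<Rightarrow> complex) \<Rightarrow> (nat \<Rightarrow> 'a \<Rightarrow> 'b) \<Rightarrow> 'a \<Rightarrow> 'b" where
  "opc K N z T x = hsum K (map (\<lambda>k. hscale K (z k) (T k x)) [0..<N])"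

definition multi_indices :: "nat \<Rightarrow> nat \<Rightarrow> nat list list" where
  "multi_indices N m = filter (\<lambda>a. sum_list a = m) (List.n_lists N [0..<Suc m])"

definition hpoly_eval :: "'y hspace \<Rightarrow> nat \<Rightarrow> nat \<Rightarrow> (nat list \<Rightarrow> 'u \<Rightarrow> 'y)
                          \<Rightarrow> (nat \<Rightarrow> complex) \<Rightarrow> 'u \<Rightarrow> 'y" where
  "hpoly_eval Y N m T z u =
     hsum Y (map (\<lambda>a. hscale Y (\<Prod>k<N. z k ^ (a ! k)) (T a u)) (multi_indices N m))"

definition is_hom_poly :: "'u hspace \<Rightarrow> 'y hspace \<Rightarrow> nat \<Rightarrow> nat
                          \<Rightarrow> ((nat \<Rightarrow> complex) \<Rightarrow> 'u \<Rightarrow> 'y) \<Rightarrow> bool" where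
  "is_hom_poly U Y N m \<theta> \<longleftrightarrow>
     (\<exists>T. (\<forall>a. length a = N \<and> sum_list a = m \<longrightarrow> bop U Y (T a)) \<and>
          (\<forall>z. \<forall>u\<in>hcarrier U. \<theta> z u = hpoly_eval Y N m T z u))"

definition is_system :: "nat \<Rightarrow> (nat \<Rightarrow> 'x \<Rightarrow> 'x) \<Rightarrow> (nat \<Rightarrow> 'u \<Rightarrow> 'x) \<Rightarrow> (nat \<Rightarrow> 'x \<Rightarrow> 'y)
     \<Rightarrow> (nat \<Rightarrow> 'u \<Rightarrow> 'y) \<Rightarrow> 'x hspace \<Rightarrow> 'u hspace \<Rightarrow> 'y hspace \<Rightarrow> bool" where
  "is_system N A B C D X U Y \<longleftrightarrow>
     sep_hilbert X \<and> sep_hilbert U \<and> sep_hilbert Y \<and>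
     (\<forall>k<N. bop X X (A k) \<and> bop U X (B k) \<and> bop X Y (C k) \<and> bop U Y (D k))"

definition resolvent_op :: "'x hspace \<Rightarrow> nat \<Rightarrow> (nat \<Rightarrow> complex) \<Rightarrow> (nat \<Rightarrow> 'x \<Rightarrow> 'x) \<Rightarrow> 'x \<Rightarrow> 'x" where
  "resolvent_op X N z A x = hadd X x (hscale X (-1) (opc X N z A x))"

text \<open>Transfer function zD + zC (I - zA)^{-1} zB (meaningful where I - zA is invertible).\<close>
definition transfer_fun :: "nat \<Rightarrow> (nat \<Rightarrow> 'x \<Rightarrow> 'x) \<Rightarrow> (nat \<Rightarrow> 'u \<Rightarrow> 'x) \<Rightarrow> (nat \<Rightarrow> 'x \<Rightarrow> 'y)
     \<Rightarrow> (nat \<Rightarrow> 'u \<Rightarrow> 'y) \<Rightarrow> 'x hspace \<Rightarrow> 'y hspace \<Rightarrow> (nat \<Rightarrow> complex) \<Rightarrow> 'u \<Rightarrow> 'y" where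
  "transfer_fun N A B C D X Y z u =
     hadd Y (opc Y N z D u)
       (opc Y N z C (inv_into (hcarrier X) (resolvent_op X N z A) (opc X N z B u)))"

definition transfer_coincides :: "nat \<Rightarrow> (nat \<Rightarrow> 'x \<Rightarrow> 'x) \<Rightarrow> (nat \<Rightarrow> 'u \<Rightarrow> 'x) \<Rightarrow> (nat \<Rightarrow> 'x \<Rightarrow> 'y)
     \<Rightarrow> (nat \<Rightarrow> 'u \<Rightarrow> 'y) \<Rightarrow> 'x hspace \<Rightarrow> 'u hspace \<Rightarrow> 'y hspace
     \<Rightarrow> ((nat \<Rightarrow> complex) \<Rightarrow> 'u \<Rightarrow> 'y) \<Rightarrow> bool" where
  "transfer_coincides N A B C D X U Y \<theta> \<longleftrightarrow>
     (\<exists>e>0. \<forall>z. (\<forall>k<N. cmod (z k) < e) \<longrightarrow>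
        bij_betw (resolvent_op X N z A) (hcarrier X) (hcarrier X) \<and>
        (\<forall>u\<in>hcarrier U. \<theta> z u = transfer_fun N A B C D X Y z u))"

text \<open>Middle part zL^(2) ... zL^(i+1) of a product, a map W(i+1) \<rightarrow> W(1).\<close>
fun mid_prod :: "(nat \<Rightarrow> 'w hspace) \<Rightarrow> nat \<Rightarrow> (nat \<Rightarrow> complex) \<Rightarrow> (nat \<Rightarrow> nat \<Rightarrow> 'w \<Rightarrow> 'w)
                  \<Rightarrow> nat \<Rightarrow> 'w \<Rightarrow> 'w" where
  "mid_prod W N z L 0 = id"
| "mid_prod W N z L (Suc i) = mid_prod W N z L i \<circ> opc (W (Suc i)) N z (L (i + 2))"

end

theory Submission
  imports Defs "HOL-Analysis.L2_Norm"
begin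

text \<open>
  Expand \<open>\<theta>(z) = \<Sum>_v z^v T_v\<close> over the words \<open>v\<close> of length \<open>m\<close> in the letters
  \<open>0, \<dots>, N-1\<close>: the coefficient of a multi-index sits on its sorted word, every other word
  gets \<open>0\<close>. For \<open>m > 1\<close> take every intermediate space to be \<open>W = \<Oplus>_{|w| < m} U\<close>. The last
  operator \<open>L^(m)_k\<close> puts \<open>u\<close> at the one-letter word \<open>k\<close> and the middle ones prepend the
  letter \<open>k\<close>, so \<open>(zS)^{m-2} zL^(m) u\<close> has component \<open>z^w u\<close> at each word \<open>w\<close> of length
  \<open>m - 1\<close>; then \<open>L^(1)_k g = \<Sum>_{|w| = m-1} T_{kw} g_w\<close> reassembles \<open>\<theta>(z) u\<close>.

  For a realization, the Neumann series with explicit remainder gives, along a ray,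
  \<open>\<theta>(t z) = t zD + \<Sum>_n t^{n+2} zC (zA)^n zB + O(t^{m+1})\<close> as \<open>t \<rightarrow> 0+\<close>, while homogeneity
  gives \<open>\<theta>(t z) = t^m \<theta>(z)\<close>; comparing the coefficients of \<open>t^m\<close> yields
  \<open>\<theta>(z) = zC (zA)^{m-2} zB\<close>.
\<close>

section \<open>Inner product spaces\<close>

locale pre_hilbert =
  fixes H :: "'a hspace"
  assumes vector_space: "is_vector_space H" and inner_product: "is_inner_product H"
begin

lemma zero_closed [simp]: "hzero H \<in> hcarrier H"
  using vector_space unfolding is_vector_space_def by (elim conjE) blast

lemma add_closed [simp]: "x \<in> hcarrier H \<Longrightarrow> y \<in> hcarrier H \<Longrightarrow> hadd H x y \<in> hcarrier H"
  using vector_space unfolding is_vector_space_def by (elim conjE) blast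

lemma scale_closed [simp]: "x \<in> hcarrier H \<Longrightarrow> hscale H a x \<in> hcarrier H"
  using vector_space unfolding is_vector_space_def by (elim conjE) blast

lemma add_assoc:
  "x \<in> hcarrier H \<Longrightarrow> y \<in> hcarrier H \<Longrightarrow> w \<in> hcarrier H \<Longrightarrow>
   hadd H (hadd H x y) w = hadd H x (hadd H y w)"
  using vector_space unfolding is_vector_space_def by (elim conjE) blast

lemma add_commute: "x \<in> hcarrier H \<Longrightarrow> y \<in> hcarrier H \<Longrightarrow> hadd H x y = hadd H y x"
  using vector_space unfolding is_vector_space_def by (elim conjE) blast

lemma add_left_commute:
  "x \<in> hcarrier H \<Longrightarrow> y \<in> hcarrier H \<Longrightarrow> w \<in> hcarrier H \<Longrightarrow>
   hadd H x (hadd H y w) = hadd H y (hadd H x w)"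
  by (metis add_assoc add_commute)

lemma add_zero_left [simp]: "x \<in> hcarrier H \<Longrightarrow> hadd H (hzero H) x = x"
  using vector_space unfolding is_vector_space_def by (elim conjE) blast

lemma add_zero_right [simp]: "x \<in> hcarrier H \<Longrightarrow> hadd H x (hzero H) = x"
  using add_commute add_zero_left zero_closed by metis

lemma add_neg: "x \<in> hcarrier H \<Longrightarrow> hadd H x (hscale H (-1) x) = hzero H"
  using vector_space unfolding is_vector_space_def by (elim conjE) blast

lemma scale_one [simp]: "x \<in> hcarrier H \<Longrightarrow> hscale H 1 x = x"
  using vector_space unfolding is_vector_space_def by (elim conjE) blast

lemma scale_scale: "x \<in> hcarrier H \<Longrightarrow> hscale H (a * b) x = hscale H a (hscale H b x)"
  using vector_space unfolding is_vector_space_def by (elim conjE) blast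

lemma scale_add_left:
  "x \<in> hcarrier H \<Longrightarrow> hscale H (a + b) x = hadd H (hscale H a x) (hscale H b x)"
  using vector_space unfolding is_vector_space_def by (elim conjE) blast

lemma scale_add_right:
  "x \<in> hcarrier H \<Longrightarrow> y \<in> hcarrier H \<Longrightarrow>
   hscale H a (hadd H x y) = hadd H (hscale H a x) (hscale H a y)"
  using vector_space unfolding is_vector_space_def by (elim conjE) auto

lemma inner_add_left:
  "x \<in> hcarrier H \<Longrightarrow> y \<in> hcarrier H \<Longrightarrow> w \<in> hcarrier H \<Longrightarrow>
   hinner H (hadd H x y) w = hinner H x w + hinner H y w"
  using inner_product unfolding is_inner_product_def by (elim conjE) blast

lemma inner_scale_left:
  "x \<in> hcarrier H \<Longrightarrow> w \<in> hcarrier H \<Longrightarrow> hinner H (hscale H a x) w = a * hinner H x w"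
  using inner_product unfolding is_inner_product_def by (elim conjE) blast

lemma inner_commute: "x \<in> hcarrier H \<Longrightarrow> y \<in> hcarrier H \<Longrightarrow> hinner H y x = cnj (hinner H x y)"
  using inner_product unfolding is_inner_product_def by (elim conjE) blast

lemma inner_self_nonneg: "x \<in> hcarrier H \<Longrightarrow> 0 \<le> Re (hinner H x x)"
  using inner_product unfolding is_inner_product_def by (elim conjE) blast

lemma inner_self_eq_zero: "x \<in> hcarrier H \<Longrightarrow> hinner H x x = 0 \<Longrightarrow> x = hzero H"
  using inner_product unfolding is_inner_product_def by (elim conjE) blast

lemma inner_add_right:
  "x \<in> hcarrier H \<Longrightarrow> y \<in> hcarrier H \<Longrightarrow> w \<in> hcarrier H \<Longrightarrow>
   hinner H w (hadd H x y) = hinner H w x + hinner H w y"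
  by (simp add: inner_commute[of _ w] inner_add_left)

lemma inner_scale_right:
  "x \<in> hcarrier H \<Longrightarrow> w \<in> hcarrier H \<Longrightarrow> hinner H w (hscale H a x) = cnj a * hinner H w x"
  by (simp add: inner_commute[of _ w] inner_scale_left)

lemma inner_zero_left [simp]: "w \<in> hcarrier H \<Longrightarrow> hinner H (hzero H) w = 0"
  using inner_add_left[of "hzero H" "hzero H" w] by simp

lemma inner_zero_right [simp]: "w \<in> hcarrier H \<Longrightarrow> hinner H w (hzero H) = 0"
  using inner_commute[of "hzero H" w] by simp

lemma inner_self_real: "x \<in> hcarrier H \<Longrightarrow> hinner H x x = complex_of_real (Re (hinner H x x))"
  using inner_commute[of x x] by (simp add: complex_eq_iff)

lemma eq_by_inner:
  assumes x: "x \<in> hcarrier H" and y: "y \<in> hcarrier H"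
    and same: "\<And>w. w \<in> hcarrier H \<Longrightarrow> hinner H x w = hinner H y w"
  shows "x = y"
proof -
  let ?d = "hadd H x (hscale H (-1) y)"
  have d: "?d \<in> hcarrier H" using x y by simp
  have "hinner H ?d ?d = hinner H x ?d - hinner H y ?d"
    using x y d by (simp add: inner_add_left inner_scale_left)
  then have "?d = hzero H" using same d inner_self_eq_zero by simp
  then have "hadd H ?d y = y" using y by simp
  moreover have "hadd H ?d y = x"
    using x y add_neg[OF y] by (simp add: add_assoc add_commute[of "hscale H (-1) y" y])
  ultimately show ?thesis by simp
qed

lemma scale_zero_left [simp]: "x \<in> hcarrier H \<Longrightarrow> hscale H 0 x = hzero H"
  by (rule eq_by_inner) (auto simp: inner_scale_left)

lemma scale_zero_right [simp]: "hscale H a (hzero H) = hzero H"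
  by (rule eq_by_inner) (auto simp: inner_scale_left)

lemma norm_nonneg [simp]: "x \<in> hcarrier H \<Longrightarrow> 0 \<le> hnorm H x"
  using inner_self_nonneg by (simp add: hnorm_def)

lemma norm_zero [simp]: "hnorm H (hzero H) = 0"
  by (simp add: hnorm_def)

lemma norm_square: "x \<in> hcarrier H \<Longrightarrow> (hnorm H x)\<^sup>2 = Re (hinner H x x)"
  using inner_self_nonneg[of x] by (simp add: hnorm_def)

lemma Cauchy_Schwarz_square:
  assumes x: "x \<in> hcarrier H" and y: "y \<in> hcarrier H"
  shows "(cmod (hinner H x y))\<^sup>2 \<le> Re (hinner H x x) * Re (hinner H y y)"
proof (cases "hinner H y y = 0")
  case True
  then show ?thesis using x y inner_self_eq_zero[OF y] inner_self_nonneg[OF x] by simp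
next
  case False
  define B where "B = Re (hinner H y y)"
  define p where "p = hinner H x y"
  have yy: "hinner H y y = complex_of_real B" using inner_self_real[OF y] B_def by simp
  have B: "B > 0" using False yy inner_self_nonneg[OF y] B_def by (metis less_eq_real_def of_real_0)
  \<comment> \<open>expand \<open>0 \<le> \<langle>x - l y, x - l y\<rangle>\<close> with the optimal \<open>l = \<langle>x, y\<rangle> / \<langle>y, y\<rangle>\<close>\<close>
  define l where "l = p / complex_of_real B"
  let ?v = "hadd H x (hscale H (-l) y)"
  have yx: "hinner H y x = cnj p" using inner_commute[OF x y] p_def by simp
  have "hinner H ?v ?v = hinner H x x - cnj l * p - l * cnj p + l * cnj l * B"
    using x y by (simp add: inner_add_left inner_add_right inner_scale_left inner_scale_right
        yy yx flip: p_def) (simp add: algebra_simps)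
  also have "\<dots> = hinner H x x - complex_of_real ((cmod p)\<^sup>2 / B)"
  proof -
    have "p * cnj p = (complex_of_real (cmod p))\<^sup>2"
      by (metis complex_norm_square of_real_power)
    then show ?thesis using B by (simp add: l_def field_simps)
  qed
  finally have "Re (hinner H ?v ?v) = Re (hinner H x x) - (cmod p)\<^sup>2 / B"
    by simp
  moreover have "0 \<le> Re (hinner H ?v ?v)" using x y by (simp add: inner_self_nonneg)
  ultimately have "(cmod p)\<^sup>2 / B \<le> Re (hinner H x x)" by linarith
  then have "(cmod p)\<^sup>2 \<le> Re (hinner H x x) * B" using B by (simp add: pos_divide_le_eq)
  then show ?thesis by (simp add: p_def B_def)
qed

lemma Cauchy_Schwarz:
  "x \<in> hcarrier H \<Longrightarrow> y \<in> hcarrier H \<Longrightarrow> cmod (hinner H x y) \<le> hnorm H x * hnorm H y"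
  using Cauchy_Schwarz_square[of x y] real_sqrt_le_mono
  by (fastforce simp: hnorm_def real_sqrt_mult)

lemma norm_scale:
  assumes x: "x \<in> hcarrier H"
  shows "hnorm H (hscale H a x) = cmod a * hnorm H x"
proof -
  have "hinner H (hscale H a x) (hscale H a x) = a * cnj a * hinner H x x"
    using x by (simp add: inner_scale_left inner_scale_right)
  also have "\<dots> = complex_of_real ((cmod a)\<^sup>2 * Re (hinner H x x))"
    using inner_self_real[OF x] by (metis complex_norm_square of_real_mult)
  finally have "Re (hinner H (hscale H a x) (hscale H a x)) = (cmod a)\<^sup>2 * Re (hinner H x x)"
    by simp
  then show ?thesis by (simp add: hnorm_def real_sqrt_mult)
qed

lemma norm_triangle:
  assumes x: "x \<in> hcarrier H" and y: "y \<in> hcarrier H"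
  shows "hnorm H (hadd H x y) \<le> hnorm H x + hnorm H y"
proof -
  have "hinner H (hadd H x y) (hadd H x y)
      = hinner H x x + hinner H y y + (hinner H x y + cnj (hinner H x y))"
    using x y by (simp add: inner_add_left inner_add_right flip: inner_commute[OF x y])
  then have "Re (hinner H (hadd H x y) (hadd H x y))
      = Re (hinner H x x) + Re (hinner H y y) + 2 * Re (hinner H x y)"
    by simp
  also have "\<dots> \<le> Re (hinner H x x) + Re (hinner H y y) + 2 * (hnorm H x * hnorm H y)"
    using Cauchy_Schwarz[OF x y] complex_Re_le_cmod[of "hinner H x y"] by linarith
  also have "\<dots> = (hnorm H x + hnorm H y)\<^sup>2"
    using norm_square[OF x] norm_square[OF y] by (simp add: power2_eq_square algebra_simps)
  finally have "(hnorm H (hadd H x y))\<^sup>2 \<le> (hnorm H x + hnorm H y)\<^sup>2"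
    using x y by (simp add: norm_square)
  then show ?thesis by (rule power2_le_imp_le) (simp add: x y)
qed

lemma hsum_closed: "set xs \<subseteq> hcarrier H \<Longrightarrow> hsum H xs \<in> hcarrier H"
  by (induction xs) (auto simp: hsum_def)

lemma inner_hsum_left:
  "set xs \<subseteq> hcarrier H \<Longrightarrow> w \<in> hcarrier H \<Longrightarrow>
   hinner H (hsum H xs) w = (\<Sum>x\<leftarrow>xs. hinner H x w)"
proof (induction xs)
  case (Cons x xs)
  then show ?case using hsum_closed[of xs] by (simp add: hsum_def inner_add_left)
qed (simp add: hsum_def)

lemma norm_hsum_le: "set xs \<subseteq> hcarrier H \<Longrightarrow> hnorm H (hsum H xs) \<le> (\<Sum>x\<leftarrow>xs. hnorm H x)"
proof (induction xs)
  case (Cons x xs)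
  then show ?case using hsum_closed[of xs] norm_triangle[of x "hsum H xs"] by (simp add: hsum_def)
qed (simp add: hsum_def)

lemma opc_closed: "(\<And>k. k < N \<Longrightarrow> T k x \<in> hcarrier H) \<Longrightarrow> opc H N z T x \<in> hcarrier H"
  unfolding opc_def by (rule hsum_closed) auto

lemma inner_opc_left:
  "(\<And>k. k < N \<Longrightarrow> T k x \<in> hcarrier H) \<Longrightarrow> w \<in> hcarrier H \<Longrightarrow>
   hinner H (opc H N z T x) w = (\<Sum>k<N. z k * hinner H (T k x) w)"
  unfolding opc_def
  by (subst inner_hsum_left)
    (auto simp: inner_scale_left atLeast0LessThan[symmetric] sum_list_distinct_conv_sum_set)

lemma norm_opc_le:
  "(\<And>k. k < N \<Longrightarrow> T k x \<in> hcarrier H) \<Longrightarrow>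
   hnorm H (opc H N z T x) \<le> (\<Sum>k<N. cmod (z k) * hnorm H (T k x))"
  unfolding opc_def
  by (rule order_trans[OF norm_hsum_le])
    (auto simp: norm_scale atLeast0LessThan[symmetric] sum_list_distinct_conv_sum_set)

lemma opc_homogeneous:
  assumes "\<And>k. k < N \<Longrightarrow> T k x \<in> hcarrier H"
  shows "opc H N (\<lambda>k. c * z k) T x = hscale H c (opc H N z T x)"
  by (rule eq_by_inner)
    (use assms in \<open>simp_all add: opc_closed inner_opc_left inner_scale_left sum_distrib_left
      mult.assoc\<close>)

lemma opc_zero: "opc H N z (\<lambda>_ _. hzero H) x = hzero H"
  by (rule eq_by_inner) (simp_all add: opc_closed inner_opc_left)

lemma opc_single:
  assumes "y \<in> hcarrier H" "j < N"
  shows "opc H N z (\<lambda>k _. if k = j then y else hzero H) x = hscale H (z j) y"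
proof (rule eq_by_inner)
  fix w assume w: "w \<in> hcarrier H"
  have "(\<Sum>k<N. z k * hinner H (if k = j then y else hzero H) w)
      = (\<Sum>k<N. if k = j then z j * hinner H y w else 0)"
    using w by (intro sum.cong) auto
  then show "hinner H (opc H N z (\<lambda>k _. if k = j then y else hzero H) x) w
      = hinner H (hscale H (z j) y) w"
    using assms w by (simp add: inner_opc_left inner_scale_left)
qed (use assms in \<open>simp_all add: opc_closed\<close>)

end

lemma sep_hilbert_pre_hilbert: "sep_hilbert H \<Longrightarrow> pre_hilbert H"
  unfolding sep_hilbert_def pre_hilbert_def by blast

section \<open>Bounded operators\<close>

lemma bop_closed: "bop H K T \<Longrightarrow> x \<in> hcarrier H \<Longrightarrow> T x \<in> hcarrier K"
  unfolding bop_def by blast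

lemma bop_linear:
  "bop H K T \<Longrightarrow> x \<in> hcarrier H \<Longrightarrow> y \<in> hcarrier H \<Longrightarrow>
   T (hadd H (hscale H a x) (hscale H b y)) = hadd K (hscale K a (T x)) (hscale K b (T y))"
  unfolding bop_def by blast

lemma bop_bound:
  assumes "bop H K T" "pre_hilbert H"
  shows "\<exists>C\<ge>0. \<forall>x\<in>hcarrier H. hnorm K (T x) \<le> C * hnorm H x"
proof -
  obtain C where C: "\<forall>x\<in>hcarrier H. hnorm K (T x) \<le> C * hnorm H x"
    using assms(1) unfolding bop_def by blast
  have "hnorm K (T x) \<le> max C 0 * hnorm H x" if "x \<in> hcarrier H" for x
    using C that pre_hilbert.norm_nonneg[OF assms(2) that]
    by (meson max.cobounded1 mult_right_mono order_trans)
  then show ?thesis by (intro exI[of _ "max C 0"]) simp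
qed

lemma bop_inner_linear:
  assumes "bop H K T" "pre_hilbert K"
    and "x \<in> hcarrier H" "y \<in> hcarrier H" "w \<in> hcarrier K"
  shows "hinner K (T (hadd H (hscale H a x) (hscale H b y))) w
       = a * hinner K (T x) w + b * hinner K (T y) w"
  using assms bop_closed[OF assms(1)]
  by (simp add: bop_linear pre_hilbert.inner_add_left pre_hilbert.inner_scale_left
      pre_hilbert.scale_closed)

lemma bopI_inner:
  assumes H: "pre_hilbert H" and K: "pre_hilbert K"
    and closed: "\<And>x. x \<in> hcarrier H \<Longrightarrow> T x \<in> hcarrier K"
    and linear: "\<And>a b x y w. x \<in> hcarrier H \<Longrightarrow> y \<in> hcarrier H \<Longrightarrow> w \<in> hcarrier K \<Longrightarrow>
      hinner K (T (hadd H (hscale H a x) (hscale H b y))) w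
        = a * hinner K (T x) w + b * hinner K (T y) w"
    and bound: "\<And>x. x \<in> hcarrier H \<Longrightarrow> hnorm K (T x) \<le> C * hnorm H x"
  shows "bop H K T"
proof -
  interpret H: pre_hilbert H by fact
  interpret K: pre_hilbert K by fact
  have "T (hadd H (hscale H a x) (hscale H b y)) = hadd K (hscale K a (T x)) (hscale K b (T y))"
    if "x \<in> hcarrier H" "y \<in> hcarrier H" for a b x y
    by (rule K.eq_by_inner) (use that in \<open>simp_all add: closed linear K.inner_add_left
        K.inner_scale_left\<close>)
  then show ?thesis unfolding bop_def using closed bound by blast
qed

lemma bop_scale:
  assumes "bop H K T" "pre_hilbert H" "pre_hilbert K" "x \<in> hcarrier H"
  shows "T (hscale H a x) = hscale K a (T x)"
  using bop_linear[OF assms(1,4,4), of a 0] bop_closed[OF assms(1,4)] assms(2-4)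
  by (simp add: pre_hilbert.scale_zero_left pre_hilbert.add_zero_right pre_hilbert.scale_closed)

lemma bop_opc:
  assumes H: "pre_hilbert H" and K: "pre_hilbert K" and T: "\<And>k. k < N \<Longrightarrow> bop H K (T k)"
  shows "bop H K (opc K N z T)"
proof -
  interpret H: pre_hilbert H by fact
  interpret K: pre_hilbert K by fact
  have "\<forall>k\<in>{..<N}. \<exists>c\<ge>0. \<forall>x\<in>hcarrier H. hnorm K (T k x) \<le> c * hnorm H x"
    using bop_bound[OF T H] by blast
  then obtain C where C: "\<And>k x. k < N \<Longrightarrow> x \<in> hcarrier H \<Longrightarrow> hnorm K (T k x) \<le> C k * hnorm H x"
    by (metis lessThan_iff)
  have Tx: "\<And>k x. k < N \<Longrightarrow> x \<in> hcarrier H \<Longrightarrow> T k x \<in> hcarrier K"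
    using bop_closed[OF T] .
  show ?thesis
  proof (rule bopI_inner[OF H K, where C = "\<Sum>k<N. cmod (z k) * C k"])
    fix x assume x: "x \<in> hcarrier H"
    show "opc K N z T x \<in> hcarrier K" using Tx x by (simp add: K.opc_closed)
    have "hnorm K (opc K N z T x) \<le> (\<Sum>k<N. cmod (z k) * hnorm K (T k x))"
      using Tx x by (simp add: K.norm_opc_le)
    also have "\<dots> \<le> (\<Sum>k<N. cmod (z k) * (C k * hnorm H x))"
      using C x by (intro sum_mono mult_left_mono) auto
    finally show "hnorm K (opc K N z T x) \<le> (\<Sum>k<N. cmod (z k) * C k) * hnorm H x"
      by (simp add: sum_distrib_right mult.assoc)
  next
    fix a b x y w assume xyw: "x \<in> hcarrier H" "y \<in> hcarrier H" "w \<in> hcarrier K"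
    then show "hinner K (opc K N z T (hadd H (hscale H a x) (hscale H b y))) w
             = a * hinner K (opc K N z T x) w + b * hinner K (opc K N z T y) w"
      using Tx bop_inner_linear[OF T K xyw]
      by (simp add: K.inner_opc_left sum.distrib sum_distrib_left algebra_simps)
  qed
qed

lemma bop_comp:
  assumes H: "pre_hilbert H" and K: "pre_hilbert K" and L: "pre_hilbert L"
    and S: "bop H K S" and T: "bop K L T"
  shows "bop H L (T \<circ> S)"
proof -
  obtain C1 where C1: "C1 \<ge> 0" "\<forall>x\<in>hcarrier H. hnorm K (S x) \<le> C1 * hnorm H x"
    using bop_bound[OF S H] by blast
  obtain C2 where C2: "C2 \<ge> 0" "\<forall>x\<in>hcarrier K. hnorm L (T x) \<le> C2 * hnorm K x"
    using bop_bound[OF T K] by blast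
  show ?thesis
  proof (rule bopI_inner[OF H L, where C = "C2 * C1"])
    fix x assume x: "x \<in> hcarrier H"
    show "(T \<circ> S) x \<in> hcarrier L" using bop_closed[OF T bop_closed[OF S x]] by simp
    have "hnorm L (T (S x)) \<le> C2 * hnorm K (S x)" using C2 bop_closed[OF S x] by blast
    also have "\<dots> \<le> C2 * (C1 * hnorm H x)" using C1 C2 x by (simp add: mult_left_mono)
    finally show "hnorm L ((T \<circ> S) x) \<le> C2 * C1 * hnorm H x" by (simp add: mult.assoc)
  next
    fix a b x y w assume "x \<in> hcarrier H" "y \<in> hcarrier H" "w \<in> hcarrier L"
    then show "hinner L ((T \<circ> S) (hadd H (hscale H a x) (hscale H b y))) w
             = a * hinner L ((T \<circ> S) x) w + b * hinner L ((T \<circ> S) y) w"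
      using bop_linear[OF S] bop_inner_linear[OF T L] bop_closed[OF S] by simp
  qed
qed

lemma bop_id:
  assumes "pre_hilbert H"
  shows "bop H H id"
proof -
  interpret H: pre_hilbert H by fact
  show ?thesis
    by (rule bopI_inner[OF assms assms, where C = 1])
      (simp_all add: H.inner_add_left H.inner_scale_left)
qed

lemma bop_funpow: "pre_hilbert H \<Longrightarrow> bop H H M \<Longrightarrow> bop H H (M ^^ n)"
  by (induction n) (simp_all add: bop_id bop_comp[of H H H _ M] flip: id_def)

lemma bop_zero:
  assumes "pre_hilbert H" "pre_hilbert K"
  shows "bop H K (\<lambda>_. hzero K)"
proof -
  interpret K: pre_hilbert K by fact
  show ?thesis by (rule bopI_inner[OF assms, where C = 0]) simp_all
qed

section \<open>Finite direct sums\<close>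

definition direct_sum :: "'a hspace \<Rightarrow> 'i set \<Rightarrow> ('i \<Rightarrow> 'a) hspace" where
  "direct_sum H I =
    \<lparr>hcarrier = {f. (\<forall>i\<in>I. f i \<in> hcarrier H) \<and> (\<forall>i. i \<notin> I \<longrightarrow> f i = hzero H)},
     hzero = (\<lambda>i. hzero H), hadd = (\<lambda>f g i. hadd H (f i) (g i)),
     hscale = (\<lambda>a f i. hscale H a (f i)),
     hinner = (\<lambda>f g. \<Sum>i\<in>I. hinner H (f i) (g i))\<rparr>"

lemma direct_sum_simps [simp]:
  "hzero (direct_sum H I) = (\<lambda>i. hzero H)"
  "hadd (direct_sum H I) f g = (\<lambda>i. hadd H (f i) (g i))"
  "hscale (direct_sum H I) a f = (\<lambda>i. hscale H a (f i))"
  "hinner (direct_sum H I) f g = (\<Sum>i\<in>I. hinner H (f i) (g i))"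
  by (simp_all add: direct_sum_def)

context pre_hilbert
begin

lemma direct_sum_carrier:
  "f \<in> hcarrier (direct_sum H I) \<longleftrightarrow> (\<forall>i. f i \<in> hcarrier H) \<and> (\<forall>i. i \<notin> I \<longrightarrow> f i = hzero H)"
  unfolding direct_sum_def by auto

lemma pre_hilbert_direct_sum:
  assumes I: "finite I"
  shows "pre_hilbert (direct_sum H I)"
proof
  show "is_vector_space (direct_sum H I)"
    unfolding is_vector_space_def direct_sum_simps
    by (intro conjI ballI allI ext)
      (simp_all add: direct_sum_carrier add_assoc add_commute add_left_commute add_neg
        scale_scale scale_add_left scale_add_right)
  have inner_self_zero: "f = (\<lambda>i. hzero H)"
    if f: "f \<in> hcarrier (direct_sum H I)" and "(\<Sum>i\<in>I. hinner H (f i) (f i)) = 0" for f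
  proof
    fix i
    have fi: "\<And>i. f i \<in> hcarrier H" using f by (simp add: direct_sum_carrier)
    have "(\<Sum>i\<in>I. Re (hinner H (f i) (f i))) = 0" using that(2) by (simp flip: Re_sum)
    then have "Re (hinner H (f i) (f i)) = 0" if "i \<in> I"
      using sum_nonneg_eq_0_iff[OF I, of "\<lambda>i. Re (hinner H (f i) (f i))"] fi inner_self_nonneg that
      by simp
    then have "hinner H (f i) (f i) = 0" if "i \<in> I"
      using that inner_self_real[OF fi[of i]] by (metis of_real_0)
    then show "f i = hzero H"
      using inner_self_eq_zero[OF fi] f by (cases "i \<in> I") (auto simp: direct_sum_carrier)
  qed
  show "is_inner_product (direct_sum H I)"
    unfolding is_inner_product_def direct_sum_simps
  proof (intro conjI ballI allI impI)
    fix f g h a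
    assume "f \<in> hcarrier (direct_sum H I)" "g \<in> hcarrier (direct_sum H I)"
      "h \<in> hcarrier (direct_sum H I)"
    then have "\<And>i. f i \<in> hcarrier H" "\<And>i. g i \<in> hcarrier H" "\<And>i. h i \<in> hcarrier H"
      by (simp_all add: direct_sum_carrier)
    then show "(\<Sum>i\<in>I. hinner H (hadd H (f i) (g i)) (h i))
        = (\<Sum>i\<in>I. hinner H (f i) (h i)) + (\<Sum>i\<in>I. hinner H (g i) (h i))"
      and "(\<Sum>i\<in>I. hinner H (hscale H a (f i)) (h i)) = a * (\<Sum>i\<in>I. hinner H (f i) (h i))"
      and "(\<Sum>i\<in>I. hinner H (g i) (f i)) = cnj (\<Sum>i\<in>I. hinner H (f i) (g i))"
      and "0 \<le> Re (\<Sum>i\<in>I. hinner H (f i) (f i))"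
      by (simp_all add: inner_add_left sum.distrib inner_scale_left sum_distrib_left cnj_sum
          inner_commute[of "f i" "g i" for i] Re_sum inner_self_nonneg sum_nonneg)
  qed (fact inner_self_zero)
qed

lemma norm_direct_sum:
  "f \<in> hcarrier (direct_sum H I) \<Longrightarrow>
   hnorm (direct_sum H I) f = L2_set (\<lambda>i. hnorm H (f i)) I"
  by (simp add: hnorm_def L2_set_def Re_sum direct_sum_carrier inner_self_nonneg)

lemma norm_component_le:
  assumes "finite I" "f \<in> hcarrier (direct_sum H I)" "i \<in> I"
  shows "hnorm H (f i) \<le> hnorm (direct_sum H I) f"
  unfolding norm_direct_sum[OF assms(2)] using assms(1,3) by (rule member_le_L2_set)

lemma norm_direct_sum_le:
  "f \<in> hcarrier (direct_sum H I) \<Longrightarrow> hnorm (direct_sum H I) f \<le> (\<Sum>i\<in>I. hnorm H (f i))"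
  by (simp add: norm_direct_sum L2_set_le_sum direct_sum_carrier)

lemma diff_direct_sum_closed:
  "f \<in> hcarrier (direct_sum H I) \<Longrightarrow> g \<in> hcarrier (direct_sum H I) \<Longrightarrow>
   (\<lambda>i. hadd H (f i) (hscale H (-1) (g i))) \<in> hcarrier (direct_sum H I)"
  by (simp add: direct_sum_carrier)

lemma dist_component_le:
  "finite I \<Longrightarrow> f \<in> hcarrier (direct_sum H I) \<Longrightarrow> g \<in> hcarrier (direct_sum H I) \<Longrightarrow> i \<in> I \<Longrightarrow>
   hdist H (f i) (g i) \<le> hdist (direct_sum H I) f g"
  unfolding hdist_def direct_sum_simps by (rule norm_component_le[OF _ diff_direct_sum_closed])

lemma dist_direct_sum_less:
  assumes I: "finite I"
    and f: "f \<in> hcarrier (direct_sum H I)" and g: "g \<in> hcarrier (direct_sum H I)"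
    and e: "e > 0" and close: "\<forall>i\<in>I. hdist H (f i) (g i) < e / (card I + 1)"
  shows "hdist (direct_sum H I) f g < e"
proof -
  have "hdist (direct_sum H I) f g \<le> (\<Sum>i\<in>I. hdist H (f i) (g i))"
    unfolding hdist_def direct_sum_simps
    by (rule norm_direct_sum_le[OF diff_direct_sum_closed[OF f g]])
  also have "\<dots> \<le> card I * (e / (card I + 1))"
    using close sum_mono[of I _ "\<lambda>_. e / (card I + 1)"] by (simp add: less_imp_le)
  also have "\<dots> < e" using e by (simp add: field_simps)
  finally show ?thesis .
qed

lemma complete_direct_sum:
  assumes I: "finite I" and complete: "is_complete H"
  shows "is_complete (direct_sum H I)"
  unfolding is_complete_def
proof (intro allI impI)
  fix s :: "nat \<Rightarrow> _"
  assume "(\<forall>n. s n \<in> hcarrier (direct_sum H I)) \<and>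
    (\<forall>e>0. \<exists>M. \<forall>n\<ge>M. \<forall>n'\<ge>M. hdist (direct_sum H I) (s n) (s n') < e)"
  then have s: "\<And>n. s n \<in> hcarrier (direct_sum H I)"
    and Cauchy: "\<And>e. e > 0 \<Longrightarrow> \<exists>M. \<forall>n\<ge>M. \<forall>n'\<ge>M. hdist (direct_sum H I) (s n) (s n') < e"
    by auto
  have "\<exists>x\<in>hcarrier H. \<forall>e>0. \<exists>M. \<forall>n\<ge>M. hdist H (s n i) x < e" if i: "i \<in> I" for i
  proof -
    have "\<exists>M. \<forall>n\<ge>M. \<forall>n'\<ge>M. hdist H (s n i) (s n' i) < e" if "e > 0" for e
      using Cauchy[OF that] dist_component_le[OF I s s i] by (meson le_less_trans)
    moreover have "\<forall>n. s n i \<in> hcarrier H" using s by (simp add: direct_sum_carrier)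
    ultimately show ?thesis
      using complete[unfolded is_complete_def, rule_format, of "\<lambda>n. s n i"] by blast
  qed
  then obtain x where x: "\<And>i. i \<in> I \<Longrightarrow> x i \<in> hcarrier H"
    and lim: "\<And>i e. i \<in> I \<Longrightarrow> e > 0 \<Longrightarrow> \<exists>M. \<forall>n\<ge>M. hdist H (s n i) (x i) < e"
    by metis
  define y where "y i = (if i \<in> I then x i else hzero H)" for i
  have y: "y \<in> hcarrier (direct_sum H I)" using x by (simp add: y_def direct_sum_carrier)
  have "\<exists>M. \<forall>n\<ge>M. hdist (direct_sum H I) (s n) y < e" if e: "e > 0" for e
  proof -
    have "\<forall>i\<in>I. eventually (\<lambda>n. hdist H (s n i) (y i) < e / (card I + 1)) sequentially"
      using lim e by (simp add: y_def eventually_sequentially)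
    then have "eventually (\<lambda>n. \<forall>i\<in>I. hdist H (s n i) (y i) < e / (card I + 1)) sequentially"
      by (rule eventually_ball_finite[OF I])
    then show ?thesis
      using dist_direct_sum_less[OF I s y e] by (auto simp: eventually_sequentially)
  qed
  then show "\<exists>y\<in>hcarrier (direct_sum H I). \<forall>e>0. \<exists>M. \<forall>n\<ge>M. hdist (direct_sum H I) (s n) y < e"
    using y by blast
qed

lemma separable_direct_sum:
  assumes I: "finite I" and separable: "is_separable H"
  shows "is_separable (direct_sum H I)"
proof -
  obtain D where D: "D \<subseteq> hcarrier H" "countable D"
    and dense: "\<forall>x\<in>hcarrier H. \<forall>e>0. \<exists>d\<in>D. hdist H x d < e"
    using separable unfolding is_separable_def by blast
  obtain xs where xs: "set xs = I" using finite_list[OF I] by blast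
  define DI where "DI = {f. (\<forall>i\<in>I. f i \<in> D) \<and> (\<forall>i. i \<notin> I \<longrightarrow> f i = hzero H)}"
  have "inj_on (\<lambda>f. map f xs) DI"
  proof (rule inj_onI)
    fix f g assume "f \<in> DI" "g \<in> DI" "map f xs = map g xs"
    then have "f i = g i" for i using xs by (cases "i \<in> I") (auto simp: DI_def)
    then show "f = g" by blast
  qed
  moreover have "(\<lambda>f. map f xs) ` DI \<subseteq> lists D" using xs by (auto simp: DI_def)
  ultimately have "countable DI"
    using countable_subset[OF _ countable_lists[OF D(2)]] countable_image_inj_on by blast
  moreover have DI: "DI \<subseteq> hcarrier (direct_sum H I)"
  proof
    fix f assume f: "f \<in> DI"
    then have "f i \<in> hcarrier H" for i using D(1) by (cases "i \<in> I") (auto simp: DI_def)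
    then show "f \<in> hcarrier (direct_sum H I)" using f by (simp add: DI_def direct_sum_carrier)
  qed
  moreover have "\<exists>d\<in>DI. hdist (direct_sum H I) f d < e"
    if f: "f \<in> hcarrier (direct_sum H I)" and e: "e > 0" for f e
  proof -
    have "e / (card I + 1) > 0" using e by simp
    then have "\<exists>d\<in>D. hdist H (f i) d < e / (card I + 1)" for i
      using f by (intro dense[rule_format]) (simp_all add: direct_sum_carrier)
    then obtain g where g: "\<forall>i. g i \<in> D \<and> hdist H (f i) (g i) < e / (card I + 1)"
      by metis
    define d where "d i = (if i \<in> I then g i else hzero H)" for i
    have d: "d \<in> DI" using g by (simp add: DI_def d_def)
    have "\<forall>i\<in>I. hdist H (f i) (d i) < e / (card I + 1)" using g by (simp add: d_def)
    then have "hdist (direct_sum H I) f d < e"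
      using dist_direct_sum_less[OF I f _ e] DI d by blast
    then show ?thesis using d by blast
  qed
  ultimately show ?thesis unfolding is_separable_def by blast
qed

end

lemma sep_hilbert_direct_sum:
  assumes "sep_hilbert H" "finite I"
  shows "sep_hilbert (direct_sum H I)"
proof -
  interpret H: pre_hilbert H using assms(1) by (rule sep_hilbert_pre_hilbert)
  show ?thesis
    using H.pre_hilbert_direct_sum H.complete_direct_sum H.separable_direct_sum assms
    unfolding sep_hilbert_def pre_hilbert_def by blast
qed

section \<open>Words and multi-indices\<close>

definition words :: "nat \<Rightarrow> nat \<Rightarrow> nat list set" where
  "words N n = {w. set w \<subseteq> {..<N} \<and> length w = n}"

definition word_monomial :: "(nat \<Rightarrow> complex) \<Rightarrow> nat list \<Rightarrow> complex" where
  "word_monomial z w = prod_list (map z w)"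

definition letter_counts :: "nat \<Rightarrow> nat list \<Rightarrow> nat list" where
  "letter_counts N w = map (count_list w) [0..<N]"

definition sorted_word :: "nat list \<Rightarrow> nat list" where
  "sorted_word a = concat (map (\<lambda>k. replicate (a ! k) k) [0..<length a])"

lemma finite_words [simp]: "finite (words N n)"
  unfolding words_def by (rule finite_lists_length_eq) simp

lemma words_0: "words N 0 = {[]}"
  unfolding words_def by auto

lemma sum_words_Suc:
  "(\<Sum>v\<in>words N (Suc n). f v) = (\<Sum>k<N. \<Sum>w\<in>words N n. f (k # w))"
proof -
  have "words N (Suc n) = (\<lambda>(k, w). k # w) ` ({..<N} \<times> words N n)"
    unfolding words_def by (auto simp: length_Suc_conv)
  moreover have "inj_on (\<lambda>(k, w). k # w) ({..<N} \<times> words N n)"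
    by (auto simp: inj_on_def)
  ultimately show ?thesis by (simp add: sum.reindex sum.cartesian_product split_def)
qed

lemma word_monomial_Nil [simp]: "word_monomial z [] = 1"
  and word_monomial_Cons [simp]: "word_monomial z (k # w) = z k * word_monomial z w"
  by (simp_all add: word_monomial_def)

lemma word_monomial_scale: "word_monomial (\<lambda>k. c * z k) w = c ^ length w * word_monomial z w"
  by (induction w) (simp_all add: mult_ac)

lemma count_list_sorted_word: "count_list (sorted_word a) k = (if k < length a then a ! k else 0)"
proof -
  have "count_list (concat xss) k = (\<Sum>xs\<leftarrow>xss. count_list xs k)" for xss :: "nat list list"
    by (induction xss) auto
  moreover have "count_list (replicate n j) k = (if j = k then n else 0)" for n j
    by (induction n) auto
  ultimately show ?thesis
    by (simp add: sorted_word_def comp_def sum_list_distinct_conv_sum_set sum.delta)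
qed

lemma letter_counts_sorted_word: "length a = N \<Longrightarrow> letter_counts N (sorted_word a) = a"
  by (auto simp: letter_counts_def count_list_sorted_word intro: nth_equalityI)

lemma length_sorted_word: "length (sorted_word a) = sum_list a"
  by (simp add: sorted_word_def length_concat comp_def sum_list_sum_nth atLeast0LessThan
      sum_list_distinct_conv_sum_set)

lemma word_monomial_sorted_word:
  "word_monomial z (sorted_word a) = (\<Prod>k<length a. z k ^ (a ! k))"
proof -
  have "prod_list (concat xss) = prod_list (map prod_list xss)" for xss :: "complex list list"
    by (induction xss) auto
  then have "word_monomial z (sorted_word a) = (\<Prod>k\<leftarrow>[0..<length a]. z k ^ (a ! k))"
    by (simp add: word_monomial_def sorted_word_def map_concat comp_def)
  also have "\<dots> = (\<Prod>k<length a. z k ^ (a ! k))"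
    using prod.distinct_set_conv_list[of "[0..<length a]" "\<lambda>k. z k ^ (a ! k)"]
    by (simp add: atLeast0LessThan)
  finally show ?thesis .
qed

lemma set_multi_indices: "set (multi_indices N m) = {a. length a = N \<and> sum_list a = m}"
proof -
  have "set a \<subseteq> {0..<Suc (sum_list a)}" for a :: "nat list"
    using member_le_sum_list[of _ a] by fastforce
  then show ?thesis unfolding multi_indices_def set_filter set_n_lists set_upt by blast
qed

lemma distinct_multi_indices: "distinct (multi_indices N m)"
  by (simp add: multi_indices_def distinct_n_lists)

lemma sorted_word_in_words: "a \<in> set (multi_indices N m) \<Longrightarrow> sorted_word a \<in> words N m"
  using length_sorted_word[of a]
  by (auto simp: set_multi_indices words_def sorted_word_def)

lemma inj_on_sorted_word: "inj_on sorted_word (set (multi_indices N m))"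
proof (rule inj_onI)
  fix a b assume "a \<in> set (multi_indices N m)" "b \<in> set (multi_indices N m)"
    and eq: "sorted_word a = sorted_word b"
  then have "length a = N" "length b = N" by (simp_all add: set_multi_indices)
  then show "a = b" by (metis eq letter_counts_sorted_word)
qed

lemma sum_multi_indices_as_words:
  fixes N m :: nat and g :: "nat list \<Rightarrow> complex"
  defines "S \<equiv> sorted_word ` set (multi_indices N m)"
  shows "(\<Sum>a\<in>set (multi_indices N m). (\<Prod>k<N. z k ^ (a ! k)) * g a)
       = (\<Sum>v\<in>words N m. word_monomial z v * (if v \<in> S then g (letter_counts N v) else 0))"
proof -
  have "(\<Sum>v\<in>words N m. word_monomial z v * (if v \<in> S then g (letter_counts N v) else 0))
      = (\<Sum>v\<in>S. word_monomial z v * g (letter_counts N v))"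
    using sorted_word_in_words by (intro sum.mono_neutral_cong_right) (auto simp: S_def)
  also have "\<dots> = (\<Sum>a\<in>set (multi_indices N m). (\<Prod>k<N. z k ^ (a ! k)) * g a)"
    unfolding S_def
    by (subst sum.reindex[OF inj_on_sorted_word])
      (auto simp: set_multi_indices letter_counts_sorted_word word_monomial_sorted_word)
  finally show ?thesis by simp
qed

section \<open>Factorization of a homogeneous polynomial\<close>

locale hom_poly =
  fixes U :: "'u hspace" and Y :: "'y hspace" and N m :: nat and T :: "nat list \<Rightarrow> 'u \<Rightarrow> 'y"
  assumes sep_hilbert_U: "sep_hilbert U" and sep_hilbert_Y: "sep_hilbert Y"
    and bop_coeff: "\<And>a. length a = N \<Longrightarrow> sum_list a = m \<Longrightarrow> bop U Y (T a)"
begin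

sublocale U: pre_hilbert U by (rule sep_hilbert_pre_hilbert[OF sep_hilbert_U])
sublocale Y: pre_hilbert Y by (rule sep_hilbert_pre_hilbert[OF sep_hilbert_Y])

definition word_coeff :: "nat list \<Rightarrow> 'u \<Rightarrow> 'y" where
  "word_coeff v = (if v \<in> sorted_word ` set (multi_indices N m) then T (letter_counts N v)
                   else (\<lambda>_. hzero Y))"

lemma bop_word_coeff: "bop U Y (word_coeff v)"
  using bop_coeff bop_zero[OF U.pre_hilbert_axioms Y.pre_hilbert_axioms]
  by (auto simp: word_coeff_def set_multi_indices letter_counts_sorted_word)

lemma coeff_closed: "a \<in> set (multi_indices N m) \<Longrightarrow> u \<in> hcarrier U \<Longrightarrow> T a u \<in> hcarrier Y"
  by (simp add: set_multi_indices bop_closed[OF bop_coeff])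

lemma hpoly_eval_closed: "u \<in> hcarrier U \<Longrightarrow> hpoly_eval Y N m T z u \<in> hcarrier Y"
  unfolding hpoly_eval_def by (rule Y.hsum_closed) (auto simp: coeff_closed)

lemma inner_hpoly_eval:
  assumes u: "u \<in> hcarrier U" and w: "w \<in> hcarrier Y"
  shows "hinner Y (hpoly_eval Y N m T z u) w
       = (\<Sum>v\<in>words N m. word_monomial z v * hinner Y (word_coeff v u) w)"
proof -
  have "hinner Y (hpoly_eval Y N m T z u) w
      = (\<Sum>a\<in>set (multi_indices N m). (\<Prod>k<N. z k ^ (a ! k)) * hinner Y (T a u) w)"
    unfolding hpoly_eval_def using u w
    by (subst Y.inner_hsum_left)
      (auto simp: coeff_closed Y.inner_scale_left comp_def distinct_multi_indices
        sum_list_distinct_conv_sum_set)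
  also have "\<dots> = (\<Sum>v\<in>words N m. word_monomial z v * hinner Y (word_coeff v u) w)"
    unfolding sum_multi_indices_as_words using w by (intro sum.cong) (auto simp: word_coeff_def)
  finally show ?thesis .
qed

lemma hpoly_eval_scale:
  assumes u: "u \<in> hcarrier U"
  shows "hpoly_eval Y N m T (\<lambda>k. c * z k) u = hscale Y (c ^ m) (hpoly_eval Y N m T z u)"
  by (rule Y.eq_by_inner)
    (use u in \<open>simp_all add: hpoly_eval_closed inner_hpoly_eval Y.inner_scale_left
      word_monomial_scale words_def sum_distrib_left mult.assoc\<close>)

lemma hpoly_eval_degree_one:
  assumes m: "m = 1" and u: "u \<in> hcarrier U"
  shows "hpoly_eval Y N m T z u = opc Y N z (\<lambda>k. word_coeff [k]) u"
proof (rule Y.eq_by_inner)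
  fix w assume w: "w \<in> hcarrier Y"
  have "hinner Y (hpoly_eval Y N m T z u) w
      = (\<Sum>v\<in>words N (Suc 0). word_monomial z v * hinner Y (word_coeff v u) w)"
    using inner_hpoly_eval[OF u w] m by simp
  also have "\<dots> = (\<Sum>k<N. z k * hinner Y (word_coeff [k] u) w)"
    by (simp add: sum_words_Suc words_0)
  also have "\<dots> = hinner Y (opc Y N z (\<lambda>k. word_coeff [k]) u) w"
    using u w by (simp add: Y.inner_opc_left bop_closed[OF bop_word_coeff])
  finally show "hinner Y (hpoly_eval Y N m T z u) w
      = hinner Y (opc Y N z (\<lambda>k. word_coeff [k]) u) w" .
qed (use u in \<open>simp_all add: hpoly_eval_closed Y.opc_closed bop_closed[OF bop_word_coeff]\<close>)

definition short_words :: "nat list set" where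
  "short_words = {w. set w \<subseteq> {..<N} \<and> length w \<le> m - 1}"

text \<open>The coordinates are indexed by the words of length \<open>< m\<close>, encoded as natural numbers
  because the statement fixes the type \<open>nat \<Rightarrow> 'u\<close> of the intermediate spaces.\<close>
definition word_space :: "(nat \<Rightarrow> 'u) hspace" where
  "word_space = direct_sum U (to_nat ` short_words)"

definition word_vector :: "(nat list \<Rightarrow> 'u) \<Rightarrow> nat \<Rightarrow> 'u" where
  "word_vector f n = (if n \<in> to_nat ` short_words then f (from_nat n) else hzero U)"

definition prepend_op :: "nat \<Rightarrow> (nat \<Rightarrow> 'u) \<Rightarrow> nat \<Rightarrow> 'u" where
  "prepend_op k g = word_vector (\<lambda>w. if w \<noteq> [] \<and> hd w = k then g (to_nat (tl w)) else hzero U)"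

definition letter_op :: "nat \<Rightarrow> 'u \<Rightarrow> nat \<Rightarrow> 'u" where
  "letter_op k u = word_vector (\<lambda>w. if w = [k] then u else hzero U)"

definition contract_op :: "nat \<Rightarrow> (nat \<Rightarrow> 'u) \<Rightarrow> 'y" where
  "contract_op k g =
     hsum Y (map (\<lambda>w. word_coeff (k # w) (g (to_nat w))) (List.n_lists (m - 1) [0..<N]))"

lemma finite_short_words: "finite short_words"
  unfolding short_words_def by (rule finite_lists_length_le) simp

lemma sep_hilbert_word_space: "sep_hilbert word_space"
  unfolding word_space_def
  by (rule sep_hilbert_direct_sum[OF sep_hilbert_U finite_imageI[OF finite_short_words]])

lemma pre_hilbert_word_space: "pre_hilbert word_space"
  by (rule sep_hilbert_pre_hilbert[OF sep_hilbert_word_space])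

lemma word_space_simps [simp]:
  "hzero word_space = (\<lambda>i. hzero U)"
  "hadd word_space f g = (\<lambda>i. hadd U (f i) (g i))"
  "hscale word_space a f = (\<lambda>i. hscale U a (f i))"
  by (simp_all add: word_space_def)

lemma word_space_carrier:
  "g \<in> hcarrier word_space \<longleftrightarrow>
   (\<forall>i. g i \<in> hcarrier U) \<and> (\<forall>i. i \<notin> to_nat ` short_words \<longrightarrow> g i = hzero U)"
  unfolding word_space_def by (rule U.direct_sum_carrier)

lemma norm_word_component_le:
  "g \<in> hcarrier word_space \<Longrightarrow> w \<in> short_words \<Longrightarrow> hnorm U (g (to_nat w)) \<le> hnorm word_space g"
  unfolding word_space_def
  by (rule U.norm_component_le[OF finite_imageI[OF finite_short_words]]) auto

lemma word_vector_at [simp]: "w \<in> short_words \<Longrightarrow> word_vector f (to_nat w) = f w"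
  by (simp add: word_vector_def)

lemma word_vector_closed:
  "(\<And>w. w \<in> short_words \<Longrightarrow> f w \<in> hcarrier U) \<Longrightarrow> word_vector f \<in> hcarrier word_space"
  by (auto simp: word_space_carrier word_vector_def)

lemma word_vector_eqI:
  assumes g: "g \<in> hcarrier word_space" and eq: "\<And>w. w \<in> short_words \<Longrightarrow> g (to_nat w) = f w"
  shows "g = word_vector f"
proof
  fix n show "g n = word_vector f n"
    using g eq[of "from_nat n"]
    by (cases "n \<in> to_nat ` short_words") (auto simp: word_space_carrier word_vector_def)
qed

lemma bop_word_vectorI:
  assumes X: "pre_hilbert X"
    and closed: "\<And>x w. x \<in> hcarrier X \<Longrightarrow> w \<in> short_words \<Longrightarrow> F x w \<in> hcarrier U"
    and linear: "\<And>a b x y w. x \<in> hcarrier X \<Longrightarrow> y \<in> hcarrier X \<Longrightarrow> w \<in> short_words \<Longrightarrow>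
      F (hadd X (hscale X a x) (hscale X b y)) w = hadd U (hscale U a (F x w)) (hscale U b (F y w))"
    and bound: "\<And>x w. x \<in> hcarrier X \<Longrightarrow> w \<in> short_words \<Longrightarrow> hnorm U (F x w) \<le> C * hnorm X x"
  shows "bop X word_space (\<lambda>x. word_vector (F x))"
  unfolding bop_def
proof (intro conjI ballI allI)
  fix x assume "x \<in> hcarrier X"
  then show "word_vector (F x) \<in> hcarrier word_space" using closed by (intro word_vector_closed)
next
  fix a b x y assume "x \<in> hcarrier X" "y \<in> hcarrier X"
  then show "word_vector (F (hadd X (hscale X a x) (hscale X b y)))
      = hadd word_space (hscale word_space a (word_vector (F x)))
          (hscale word_space b (word_vector (F y)))"
    using linear by (auto simp: word_vector_def fun_eq_iff)
next
  show "\<exists>C'. \<forall>x\<in>hcarrier X. hnorm word_space (word_vector (F x)) \<le> C' * hnorm X x"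
  proof (intro exI ballI)
    fix x assume x: "x \<in> hcarrier X"
    have "hnorm word_space (word_vector (F x))
        \<le> (\<Sum>i\<in>to_nat ` short_words. hnorm U (word_vector (F x) i))"
      using word_vector_closed[OF closed[OF x]] unfolding word_space_def
      by (rule U.norm_direct_sum_le)
    also have "\<dots> = (\<Sum>w\<in>short_words. hnorm U (F x w))"
      by (subst sum.reindex) (auto simp: inj_on_def)
    also have "\<dots> \<le> (\<Sum>w\<in>short_words. C * hnorm X x)" using bound[OF x] by (rule sum_mono)
    finally show "hnorm word_space (word_vector (F x)) \<le> (card short_words * C) * hnorm X x"
      by simp
  qed
qed

lemma tl_short_word: "w \<in> short_words \<Longrightarrow> tl w \<in> short_words"
  unfolding short_words_def by (cases w) auto

lemma words_short_words: "words N (m - 1) \<subseteq> short_words"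
  by (auto simp: words_def short_words_def)

lemma bop_prepend_op: "bop word_space word_space (prepend_op k)"
  unfolding prepend_op_def[abs_def]
proof (rule bop_word_vectorI[OF pre_hilbert_word_space, where C = 1])
  fix g w assume g: "g \<in> hcarrier word_space" and w: "w \<in> short_words"
  then show "(if w \<noteq> [] \<and> hd w = k then g (to_nat (tl w)) else hzero U) \<in> hcarrier U"
    by (simp add: word_space_carrier)
  show "hnorm U (if w \<noteq> [] \<and> hd w = k then g (to_nat (tl w)) else hzero U) \<le> 1 * hnorm word_space g"
    using norm_word_component_le[OF g tl_short_word[OF w]]
      pre_hilbert.norm_nonneg[OF pre_hilbert_word_space g]
    by simp
qed simp

lemma bop_letter_op: "bop U word_space (letter_op k)"
  unfolding letter_op_def[abs_def]
  by (rule bop_word_vectorI[OF U.pre_hilbert_axioms, where C = 1]) auto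

lemma inner_contract_op:
  assumes g: "g \<in> hcarrier word_space" and w: "w \<in> hcarrier Y"
  shows "hinner Y (contract_op k g) w
       = (\<Sum>v\<in>words N (m - 1). hinner Y (word_coeff (k # v) (g (to_nat v))) w)"
proof -
  have "g (to_nat v) \<in> hcarrier U" for v using g by (simp add: word_space_carrier)
  then show ?thesis
    unfolding contract_op_def using w
    by (subst Y.inner_hsum_left)
      (auto simp: comp_def sum_list_distinct_conv_sum_set distinct_n_lists set_n_lists words_def
        atLeast0LessThan conj_commute intro: bop_closed[OF bop_word_coeff])
qed

lemma contract_op_closed: "g \<in> hcarrier word_space \<Longrightarrow> contract_op k g \<in> hcarrier Y"
  unfolding contract_op_def
  by (auto simp: word_space_carrier intro!: Y.hsum_closed bop_closed[OF bop_word_coeff])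

lemma norm_contract_op_le:
  obtains C where "\<And>g. g \<in> hcarrier word_space \<Longrightarrow>
    hnorm Y (contract_op k g) \<le> C * hnorm word_space g"
proof -
  have "\<forall>v. \<exists>c\<ge>0. \<forall>x\<in>hcarrier U. hnorm Y (word_coeff v x) \<le> c * hnorm U x"
    using bop_bound[OF bop_word_coeff U.pre_hilbert_axioms] by blast
  then obtain C where C: "\<And>v x. x \<in> hcarrier U \<Longrightarrow> hnorm Y (word_coeff v x) \<le> C v * hnorm U x"
    and C0: "\<And>v. C v \<ge> 0"
    by metis
  let ?ws = "List.n_lists (m - 1) [0..<N]"
  have "hnorm Y (contract_op k g) \<le> (\<Sum>v\<in>words N (m - 1). C (k # v)) * hnorm word_space g"
    if g: "g \<in> hcarrier word_space" for g
  proof -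
    have gv: "\<And>v. g (to_nat v) \<in> hcarrier U" using g by (simp add: word_space_carrier)
    have "hnorm Y (contract_op k g) \<le> (\<Sum>v\<leftarrow>?ws. hnorm Y (word_coeff (k # v) (g (to_nat v))))"
      unfolding contract_op_def
      by (rule order_trans[OF Y.norm_hsum_le])
        (use gv in \<open>auto simp: comp_def intro: bop_closed[OF bop_word_coeff]\<close>)
    also have "\<dots> = (\<Sum>v\<in>words N (m - 1). hnorm Y (word_coeff (k # v) (g (to_nat v))))"
      by (simp add: sum_list_distinct_conv_sum_set distinct_n_lists set_n_lists words_def
          atLeast0LessThan conj_commute)
    also have "\<dots> \<le> (\<Sum>v\<in>words N (m - 1). C (k # v) * hnorm word_space g)"
    proof (rule sum_mono)
      fix v assume "v \<in> words N (m - 1)"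
      then have "hnorm U (g (to_nat v)) \<le> hnorm word_space g"
        using norm_word_component_le[OF g] words_short_words by blast
      then show "hnorm Y (word_coeff (k # v) (g (to_nat v))) \<le> C (k # v) * hnorm word_space g"
        using C[OF gv] C0 by (meson mult_left_mono order_trans)
    qed
    finally show ?thesis by (simp add: sum_distrib_right)
  qed
  then show ?thesis by (rule that)
qed

lemma bop_contract_op: "bop word_space Y (contract_op k)"
proof -
  obtain C where C: "\<And>g. g \<in> hcarrier word_space \<Longrightarrow>
      hnorm Y (contract_op k g) \<le> C * hnorm word_space g"
    using norm_contract_op_le[where k = k] by blast
  show ?thesis
  proof (rule bopI_inner[OF pre_hilbert_word_space Y.pre_hilbert_axioms contract_op_closed _ C])
    fix a b f g w
    assume f: "f \<in> hcarrier word_space" and g: "g \<in> hcarrier word_space" and w: "w \<in> hcarrier Y"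
    then have "hadd word_space (hscale word_space a f) (hscale word_space b g)
        \<in> hcarrier word_space"
      using pre_hilbert.add_closed[OF pre_hilbert_word_space]
        pre_hilbert.scale_closed[OF pre_hilbert_word_space]
      by blast
    moreover have "\<And>v. f (to_nat v) \<in> hcarrier U" "\<And>v. g (to_nat v) \<in> hcarrier U"
      using f g by (simp_all add: word_space_carrier)
    then have lin: "hinner Y (word_coeff v (hadd U (hscale U a (f (to_nat v')))
          (hscale U b (g (to_nat v'))))) w
        = a * hinner Y (word_coeff v (f (to_nat v'))) w
          + b * hinner Y (word_coeff v (g (to_nat v'))) w"
      for v v'
      using w by (intro bop_inner_linear[OF bop_word_coeff Y.pre_hilbert_axioms])
    ultimately show "hinner Y (contract_op k (hadd word_space (hscale word_space a f)
          (hscale word_space b g))) w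
        = a * hinner Y (contract_op k f) w + b * hinner Y (contract_op k g) w"
      using f g w
      by (simp only: inner_contract_op word_space_simps lin sum.distrib sum_distrib_left)
  qed
qed

lemma opc_word_space_at: "opc word_space N z S g n = opc U N z (\<lambda>k _. S k g n) g"
proof -
  have "hsum word_space xs n = hsum U (map (\<lambda>f. f n) xs)" for xs
    by (induction xs) (simp_all add: hsum_def)
  then show ?thesis by (simp add: opc_def comp_def)
qed

lemma opc_letter_op_at:
  assumes u: "u \<in> hcarrier U" and w: "w \<in> short_words"
  shows "opc word_space N z letter_op u (to_nat w)
       = (if length w = 1 then hscale U (word_monomial z w) u else hzero U)"
proof (cases "length w = 1")
  case True
  then obtain j where j: "w = [j]" "j < N" using w by (auto simp: short_words_def length_Suc_conv)
  then have "opc word_space N z letter_op u (to_nat w)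
      = opc U N z (\<lambda>k _. if k = j then u else hzero U) u"
    using w by (simp add: opc_word_space_at letter_op_def eq_commute[of j])
  then show ?thesis using True j u by (simp add: U.opc_single)
next
  case False
  then have "w \<noteq> [k]" for k by auto
  then have "opc word_space N z letter_op u (to_nat w) = opc U N z (\<lambda>_ _. hzero U) u"
    using w by (simp add: opc_word_space_at letter_op_def)
  then show ?thesis using False by (simp add: U.opc_zero)
qed

lemma opc_prepend_op_at:
  assumes g: "g \<in> hcarrier word_space" and w: "w \<in> short_words"
  shows "opc word_space N z prepend_op g (to_nat w)
       = (case w of [] \<Rightarrow> hzero U | j # v \<Rightarrow> hscale U (z j) (g (to_nat v)))"
proof (cases w)
  case Nil
  then show ?thesis using w by (simp add: opc_word_space_at prepend_op_def U.opc_zero)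
next
  case (Cons j v)
  then have "j < N" using w by (simp add: short_words_def)
  moreover have "opc word_space N z prepend_op g (to_nat w)
      = opc U N z (\<lambda>k _. if k = j then g (to_nat v) else hzero U) g"
    using w Cons by (simp add: opc_word_space_at prepend_op_def eq_commute[of j] cong: if_cong)
  ultimately show ?thesis
    using g Cons by (simp add: U.opc_single word_space_carrier)
qed

lemma opc_prepend_power_letter:
  assumes u: "u \<in> hcarrier U"
  shows "i < m - 1 \<Longrightarrow> (opc word_space N z prepend_op ^^ i) (opc word_space N z letter_op u)
    = word_vector (\<lambda>w. if length w = Suc i then hscale U (word_monomial z w) u else hzero U)"
proof (induction i)
  case 0
  have "opc word_space N z letter_op u \<in> hcarrier word_space"
    using u bop_closed[OF bop_letter_op]
    by (simp add: pre_hilbert.opc_closed[OF pre_hilbert_word_space])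
  then show ?case
    by (simp add: word_vector_eqI opc_letter_op_at u)
next
  case (Suc i)
  define g where
    "g = word_vector (\<lambda>w. if length w = Suc i then hscale U (word_monomial z w) u else hzero U)"
  have g: "g \<in> hcarrier word_space" unfolding g_def using u by (intro word_vector_closed) simp
  then have "opc word_space N z prepend_op g \<in> hcarrier word_space"
    using bop_closed[OF bop_prepend_op]
    by (simp add: pre_hilbert.opc_closed[OF pre_hilbert_word_space])
  moreover have "opc word_space N z prepend_op g (to_nat w)
      = (if length w = Suc (Suc i) then hscale U (word_monomial z w) u else hzero U)"
    if w: "w \<in> short_words" for w
    using w g u tl_short_word[OF w]
    by (cases w) (simp_all add: opc_prepend_op_at g_def U.scale_scale)
  ultimately show ?case using Suc by (simp add: g_def[symmetric] word_vector_eqI)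
qed

lemma hpoly_eval_factorization:
  assumes m: "1 < m" and u: "u \<in> hcarrier U"
  shows "hpoly_eval Y N m T z u
       = opc Y N z contract_op
           ((opc word_space N z prepend_op ^^ (m - 2)) (opc word_space N z letter_op u))"
proof -
  define F where
    "F = word_vector (\<lambda>w. if length w = m - 1 then hscale U (word_monomial z w) u else hzero U)"
  have power: "(opc word_space N z prepend_op ^^ (m - 2)) (opc word_space N z letter_op u) = F"
    using opc_prepend_power_letter[OF u, of "m - 2"] m
    by (simp add: F_def Suc_diff_Suc numeral_2_eq_2)
  have F: "F \<in> hcarrier word_space" unfolding F_def using u by (intro word_vector_closed) simp
  have F_at: "F (to_nat v) = hscale U (word_monomial z v) u" if "v \<in> words N (m - 1)" for v
    using that words_short_words by (auto simp: F_def words_def)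
  show ?thesis unfolding power
  proof (rule Y.eq_by_inner)
    fix w assume w: "w \<in> hcarrier Y"
    have "hinner Y (opc Y N z contract_op F) w
        = (\<Sum>k<N. \<Sum>v\<in>words N (m - 1). word_monomial z (k # v) * hinner Y (word_coeff (k # v) u) w)"
      using F w u
      by (simp add: Y.inner_opc_left bop_closed[OF bop_contract_op] inner_contract_op F_at
          bop_scale[OF bop_word_coeff U.pre_hilbert_axioms Y.pre_hilbert_axioms] Y.inner_scale_left
          bop_closed[OF bop_word_coeff] sum_distrib_left mult.assoc)
    also have "\<dots> = (\<Sum>v\<in>words N (Suc (m - 1)). word_monomial z v * hinner Y (word_coeff v u) w)"
      by (simp add: sum_words_Suc)
    also have "\<dots> = hinner Y (hpoly_eval Y N m T z u) w"
      using m by (simp add: inner_hpoly_eval[OF u w])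
    finally show "hinner Y (hpoly_eval Y N m T z u) w = hinner Y (opc Y N z contract_op F) w" ..
  qed (use F u in \<open>simp_all add: hpoly_eval_closed Y.opc_closed bop_closed[OF bop_contract_op]\<close>)
qed

end

lemma mid_prod_const: "mid_prod (\<lambda>_. W) N z (\<lambda>_. S) i = opc W N z S ^^ i"
  by (induction i) (simp_all add: comp_def funpow_swap1)


section \<open>Realizations of a homogeneous polynomial\<close>

lemma constant_coeff_zero_if_small:
  fixes c :: "nat \<Rightarrow> complex"
  assumes \<delta>: "\<delta> > 0"
    and small: "\<And>t. 0 < t \<Longrightarrow> t < \<delta> \<Longrightarrow> cmod (\<Sum>j\<le>n. c j * of_real t ^ j) \<le> K * t ^ Suc n"
  shows "c 0 = 0"
proof -
  let ?p = "\<lambda>t::real. \<Sum>j\<le>n. c j * of_real t ^ j"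
  have "(?p \<longlongrightarrow> ?p 0) (at_right 0)" by (intro tendsto_intros)
  moreover have "?p 0 = c 0" by (simp add: sum.atMost_shift)
  moreover have "(?p \<longlongrightarrow> 0) (at_right 0)"
  proof (rule tendsto_0_le)
    show "((\<lambda>t. K * t ^ Suc n) \<longlongrightarrow> 0) (at_right 0)"
      by (auto intro!: tendsto_eq_intros)
    have "eventually (\<lambda>t. t \<in> {0<..<\<delta>}) (at_right (0::real))"
      by (rule eventually_at_right_real[OF \<delta>])
    then show "eventually (\<lambda>t. norm (?p t) \<le> norm (K * t ^ Suc n) * 1) (at_right 0)"
      by eventually_elim (use small in \<open>auto intro: order_trans[OF _ abs_ge_self]\<close>)
  qed
  ultimately show ?thesis by (metis tendsto_unique trivial_limit_at_right_real)
qed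

lemma coeffs_zero_if_small:
  fixes c :: "nat \<Rightarrow> complex"
  assumes \<delta>: "\<delta> > 0"
  shows "(\<And>t. 0 < t \<Longrightarrow> t < \<delta> \<Longrightarrow> cmod (\<Sum>j\<le>n. c j * of_real t ^ j) \<le> K * t ^ Suc n) \<Longrightarrow>
    \<forall>j\<le>n. c j = 0"
proof (induction n arbitrary: c)
  case 0
  then show ?case using constant_coeff_zero_if_small[OF \<delta>] by blast
next
  case (Suc n)
  have c0: "c 0 = 0" by (rule constant_coeff_zero_if_small[OF \<delta> Suc.prems])
  have "\<forall>j\<le>n. c (Suc j) = 0"
  proof (rule Suc.IH)
    fix t :: real assume t: "0 < t" "t < \<delta>"
    have "(\<Sum>j\<le>Suc n. c j * of_real t ^ j) = of_real t * (\<Sum>j\<le>n. c (Suc j) * of_real t ^ j)"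
      by (subst sum.atMost_Suc_shift) (simp add: c0 sum_distrib_left mult_ac)
    then have "t * cmod (\<Sum>j\<le>n. c (Suc j) * of_real t ^ j) \<le> t * (K * t ^ Suc n)"
      using Suc.prems[OF t] t by (simp add: norm_mult mult_ac)
    then show "cmod (\<Sum>j\<le>n. c (Suc j) * of_real t ^ j) \<le> K * t ^ Suc n"
      using t by simp
  qed
  then show ?case using c0 by (metis le_Suc_eq not0_implies_Suc Suc_le_mono)
qed

lemma fixed_point_expansion:
  assumes X: "pre_hilbert X" and Y: "pre_hilbert Y"
    and M: "bop X X M" and G: "bop X Y G"
    and x: "x \<in> hcarrier X" and b: "b \<in> hcarrier X" and w: "w \<in> hcarrier Y"
    and fixed: "x = hadd X (hscale X t b) (hscale X t (M x))"
  shows "hinner Y (G x) w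
       = (\<Sum>n<K. t ^ Suc n * hinner Y (G ((M ^^ n) b)) w) + t ^ K * hinner Y (G ((M ^^ K) x)) w"
proof (induction K)
  case (Suc K)
  have "bop X Y (G \<circ> M ^^ K)" by (rule bop_comp[OF X X Y bop_funpow[OF X M] G])
  then have "hinner Y (G ((M ^^ K) x)) w
      = t * hinner Y (G ((M ^^ K) b)) w + t * hinner Y (G ((M ^^ K) (M x))) w"
    using bop_inner_linear[OF _ Y b bop_closed[OF M x] w] fixed by (metis comp_apply)
  then show ?case using Suc by (simp add: funpow_swap1 algebra_simps)
qed simp

lemma fixed_point_norm_le:
  assumes X: "pre_hilbert X"
    and x: "x \<in> hcarrier X" and b: "b \<in> hcarrier X" and Mx: "M x \<in> hcarrier X"
    and fixed: "x = hadd X (hscale X (of_real t) b) (hscale X (of_real t) (M x))"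
    and bound: "hnorm X (M x) \<le> CM * hnorm X x" and t: "0 \<le> t" "t * CM \<le> 1 / 2"
  shows "hnorm X x \<le> 2 * t * hnorm X b"
proof -
  interpret X: pre_hilbert X by fact
  have "hnorm X x \<le> t * hnorm X b + t * hnorm X (M x)"
    using X.norm_triangle[of "hscale X (of_real t) b" "hscale X (of_real t) (M x)"] b Mx t fixed
    by (simp add: X.norm_scale)
  also have "\<dots> \<le> t * hnorm X b + (t * CM) * hnorm X x"
    using mult_left_mono[OF bound t(1)] by (simp add: mult.assoc)
  also have "\<dots> \<le> t * hnorm X b + 1 / 2 * hnorm X x"
    using mult_right_mono[OF t(2) X.norm_nonneg[OF x]] by simp
  finally show ?thesis by simp
qed

lemma sum_ray_coeffs:
  fixes a d t :: complex and g :: "nat \<Rightarrow> complex"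
  assumes m: "1 < m"
  shows "(\<Sum>j\<le>m. ((if j = m then a else 0) - (if j = 1 then d else 0)
            - (if 2 \<le> j then g (j - 2) else 0)) * t ^ j)
       = t ^ m * a - t * d - (\<Sum>n<m - 1. t ^ (n + 2) * g n)"
proof -
  obtain k where k: "m = Suc (Suc k)" using m by (metis less_imp_Suc_add plus_1_eq_Suc)
  have "(\<Sum>j\<le>k. (if Suc (Suc j) = m then a else 0) * t ^ Suc (Suc j))
      = (\<Sum>j\<le>k. if j = k then t ^ m * a else 0)"
    by (rule sum.cong) (auto simp: k)
  then have "(\<Sum>j\<le>k. ((if Suc (Suc j) = m then a else 0) - g j) * t ^ Suc (Suc j))
      = t ^ m * a - (\<Sum>j\<le>k. t ^ (j + 2) * g j)"
    by (simp add: right_diff_distrib left_diff_distrib sum_subtractf mult.commute)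
  then show ?thesis
    using k
    by (simp add: sum.atMost_Suc_shift lessThan_Suc_atMost algebra_simps del: sum.atMost_Suc)
qed

lemma leading_coeff_eq_if_expansion:
  fixes a d :: complex and g :: "nat \<Rightarrow> complex" and r :: "real \<Rightarrow> complex"
  assumes m: "1 < m" and \<delta>: "\<delta> > 0"
    and expansion: "\<And>t. 0 < t \<Longrightarrow> t < \<delta> \<Longrightarrow>
      of_real t ^ m * a
        = of_real t * d + (\<Sum>n<m - 1. of_real t ^ (n + 2) * g n) + of_real t ^ m * r t"
    and remainder: "\<And>t. 0 < t \<Longrightarrow> t < \<delta> \<Longrightarrow> cmod (r t) \<le> K * t"
  shows "a = g (m - 2)"
proof -
  define c where "c j = (if j = m then a else 0) - (if j = 1 then d else 0)
    - (if 2 \<le> j then g (j - 2) else 0)" for j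
  have "cmod (\<Sum>j\<le>m. c j * of_real t ^ j) \<le> K * t ^ Suc m" if t: "0 < t" "t < \<delta>" for t
  proof -
    have "(\<Sum>j\<le>m. c j * of_real t ^ j) = of_real t ^ m * r t"
      unfolding c_def sum_ray_coeffs[OF m] using expansion[OF t] by (simp add: algebra_simps)
    then show ?thesis
      using mult_left_mono[OF remainder[OF t], of "t ^ m"] t
      by (simp add: norm_mult norm_power mult_ac)
  qed
  then have "c m = 0" using coeffs_zero_if_small[OF \<delta>] by blast
  then show ?thesis using m by (simp add: c_def)
qed

lemma resolvent_fixed_point:
  fixes t :: complex
  assumes X: "pre_hilbert X" and bop_A: "\<And>k. k < N \<Longrightarrow> bop X X (A k)" and b: "b \<in> hcarrier X"
    and bij: "bij_betw (resolvent_op X N (\<lambda>k. t * z k) A) (hcarrier X) (hcarrier X)"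
  defines "x \<equiv> inv_into (hcarrier X) (resolvent_op X N (\<lambda>k. t * z k) A) (hscale X t b)"
  shows "x \<in> hcarrier X" and "x = hadd X (hscale X t b) (hscale X t (opc X N z A x))"
proof -
  interpret X: pre_hilbert X by fact
  show x: "x \<in> hcarrier X"
    unfolding x_def using bij b by (auto simp: bij_betw_def inv_into_into)
  have res: "resolvent_op X N (\<lambda>k. t * z k) A x = hscale X t b"
    unfolding x_def using bij b by (simp add: bij_betw_inv_into_right)
  have Ax: "opc X N z A x \<in> hcarrier X" using bop_closed[OF bop_A] x by (simp add: X.opc_closed)
  have At: "opc X N (\<lambda>k. t * z k) A x = hscale X t (opc X N z A x)"
    using bop_closed[OF bop_A] x by (intro X.opc_homogeneous)
  show "x = hadd X (hscale X t b) (hscale X t (opc X N z A x))"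
  proof (rule X.eq_by_inner)
    fix v assume v: "v \<in> hcarrier X"
    have "hinner X (resolvent_op X N (\<lambda>k. t * z k) A x) v
        = hinner X x v - t * hinner X (opc X N z A x) v"
      unfolding resolvent_op_def At using x Ax v by (simp add: X.inner_add_left X.inner_scale_left)
    then show "hinner X x v = hinner X (hadd X (hscale X t b) (hscale X t (opc X N z A x))) v"
      unfolding res using b Ax v by (simp add: X.inner_add_left X.inner_scale_left)
  qed (use x b Ax in simp_all)
qed

lemma transfer_fun_ray_expansion:
  fixes t :: real
  assumes sys: "is_system N A B C D X U Y" and u: "u \<in> hcarrier U" and w: "w \<in> hcarrier Y"
    and bij: "bij_betw (resolvent_op X N (\<lambda>k. of_real t * z k) A) (hcarrier X) (hcarrier X)"
    and bound: "\<And>x. x \<in> hcarrier X \<Longrightarrow> hnorm X (opc X N z A x) \<le> CM * hnorm X x"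
    and t: "0 \<le> t" "t * CM \<le> 1 / 2"
  defines "x \<equiv> inv_into (hcarrier X) (resolvent_op X N (\<lambda>k. of_real t * z k) A)
    (opc X N (\<lambda>k. of_real t * z k) B u)"
  shows "x \<in> hcarrier X" and "hnorm X x \<le> 2 * t * hnorm X (opc X N z B u)"
    and "hinner Y (transfer_fun N A B C D X Y (\<lambda>k. of_real t * z k) u) w
      = t * hinner Y (opc Y N z D u) w
        + (\<Sum>n<K. of_real t ^ (n + 2)
            * hinner Y (opc Y N z C ((opc X N z A ^^ n) (opc X N z B u))) w)
        + of_real t ^ Suc K * hinner Y (opc Y N z C ((opc X N z A ^^ K) x)) w"
proof -
  interpret X: pre_hilbert X using sys by (simp add: is_system_def sep_hilbert_pre_hilbert)
  interpret Y: pre_hilbert Y using sys by (simp add: is_system_def sep_hilbert_pre_hilbert)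
  have bop_A: "\<And>k. k < N \<Longrightarrow> bop X X (A k)" and bop_B: "\<And>k. k < N \<Longrightarrow> bop U X (B k)"
    and bop_C: "\<And>k. k < N \<Longrightarrow> bop X Y (C k)" and bop_D: "\<And>k. k < N \<Longrightarrow> bop U Y (D k)"
    using sys by (simp_all add: is_system_def)
  define M where "M = opc X N z A"
  define b where "b = opc X N z B u"
  have M: "bop X X M"
    unfolding M_def by (rule bop_opc[OF X.pre_hilbert_axioms X.pre_hilbert_axioms bop_A])
  have C: "bop X Y (opc Y N z C)"
    by (rule bop_opc[OF X.pre_hilbert_axioms Y.pre_hilbert_axioms bop_C])
  have B_closed: "\<And>k. k < N \<Longrightarrow> B k u \<in> hcarrier X"
    and D_closed: "\<And>k. k < N \<Longrightarrow> D k u \<in> hcarrier Y"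
    using u by (simp_all add: bop_closed[OF bop_B] bop_closed[OF bop_D])
  have b: "b \<in> hcarrier X" unfolding b_def using B_closed by (rule X.opc_closed)
  have "opc X N (\<lambda>k. of_real t * z k) B u = hscale X t b"
    unfolding b_def using B_closed by (rule X.opc_homogeneous)
  then have x: "x \<in> hcarrier X" and fixed: "x = hadd X (hscale X t b) (hscale X t (M x))"
    using resolvent_fixed_point[OF X.pre_hilbert_axioms bop_A b bij] by (simp_all add: x_def M_def)
  show "x \<in> hcarrier X" by (fact x)
  show "hnorm X x \<le> 2 * t * hnorm X (opc X N z B u)"
    using fixed_point_norm_le[where M = M, OF X.pre_hilbert_axioms x b bop_closed[OF M x] fixed]
      bound[OF x] t
    by (simp add: M_def b_def)
  have "hinner Y (transfer_fun N A B C D X Y (\<lambda>k. of_real t * z k) u) w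
      = t * hinner Y (opc Y N z D u) w + t * hinner Y (opc Y N z C x) w"
    unfolding transfer_fun_def x_def[symmetric]
    using x w bop_closed[OF C x] bop_closed[OF bop_C] D_closed
    by (simp add: Y.opc_homogeneous Y.opc_closed Y.inner_add_left Y.inner_scale_left)
  also have "hinner Y (opc Y N z C x) w
      = (\<Sum>n<K. of_real t ^ Suc n * hinner Y (opc Y N z C ((M ^^ n) b)) w)
        + of_real t ^ K * hinner Y (opc Y N z C ((M ^^ K) x)) w"
    by (rule fixed_point_expansion[OF X.pre_hilbert_axioms Y.pre_hilbert_axioms M C x b w fixed])
  finally show "hinner Y (transfer_fun N A B C D X Y (\<lambda>k. of_real t * z k) u) w
      = t * hinner Y (opc Y N z D u) w
        + (\<Sum>n<K. of_real t ^ (n + 2)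
            * hinner Y (opc Y N z C ((opc X N z A ^^ n) (opc X N z B u))) w)
        + of_real t ^ Suc K * hinner Y (opc Y N z C ((opc X N z A ^^ K) x)) w"
    by (simp add: M_def b_def algebra_simps sum_distrib_left)
qed

lemma transfer_coincides_on_ray:
  assumes tc: "transfer_coincides N A B C D X U Y \<theta>" and u: "u \<in> hcarrier U" and CM: "CM \<ge> 0"
  obtains \<delta> where "\<delta> > 0"
    and "\<And>t. 0 < t \<Longrightarrow> t < \<delta> \<Longrightarrow>
      bij_betw (resolvent_op X N (\<lambda>k. of_real t * z k) A) (hcarrier X) (hcarrier X) \<and>
      \<theta> (\<lambda>k. of_real t * z k) u = transfer_fun N A B C D X Y (\<lambda>k. of_real t * z k) u \<and>
      t * CM \<le> 1 / 2"
proof -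
  obtain e where e: "e > 0" and near_0: "\<And>z'. \<forall>k<N. cmod (z' k) < e \<Longrightarrow>
      bij_betw (resolvent_op X N z' A) (hcarrier X) (hcarrier X) \<and>
      (\<forall>u\<in>hcarrier U. \<theta> z' u = transfer_fun N A B C D X Y z' u)"
    using tc unfolding transfer_coincides_def by blast
  define \<delta> where "\<delta> = min (e / (1 + (\<Sum>k<N. cmod (z k)))) (1 / (2 * CM + 2))"
  have "\<delta> > 0" using e CM by (simp add: \<delta>_def sum_nonneg add_pos_nonneg)
  moreover have "bij_betw (resolvent_op X N (\<lambda>k. of_real t * z k) A) (hcarrier X) (hcarrier X) \<and>
      \<theta> (\<lambda>k. of_real t * z k) u = transfer_fun N A B C D X Y (\<lambda>k. of_real t * z k) u \<and>
      t * CM \<le> 1 / 2" if t: "0 < t" "t < \<delta>" for t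
  proof -
    have "t * cmod (z k) \<le> t * (\<Sum>k<N. cmod (z k))" if "k < N" for k
      using that t by (intro mult_left_mono member_le_sum) auto
    also have "\<dots> < e" using t e by (simp add: \<delta>_def field_simps sum_nonneg add_pos_nonneg)
    finally have "\<forall>k<N. cmod (of_real t * z k) < e" using t by (simp add: norm_mult)
    moreover have "t * (2 * CM + 2) < 1" using t CM by (simp add: \<delta>_def field_simps)
    ultimately show ?thesis using near_0 u t by (simp add: algebra_simps)
  qed
  ultimately show ?thesis by (rule that)
qed

lemma homogeneous_transfer_fun:
  assumes sys: "is_system N A B C D X U Y" and tc: "transfer_coincides N A B C D X U Y \<theta>"
    and hom: "\<And>c. \<theta> (\<lambda>k. c * z k) u = hscale Y (c ^ m) (\<theta> z u)"
    and \<theta>_closed: "\<theta> z u \<in> hcarrier Y" and m: "1 < m" and u: "u \<in> hcarrier U"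
  shows "\<theta> z u = opc Y N z C ((opc X N z A ^^ (m - 2)) (opc X N z B u))"
proof -
  interpret X: pre_hilbert X using sys by (simp add: is_system_def sep_hilbert_pre_hilbert)
  interpret Y: pre_hilbert Y using sys by (simp add: is_system_def sep_hilbert_pre_hilbert)
  define M where "M = opc X N z A"
  define b where "b = opc X N z B u"
  have M: "bop X X M"
    unfolding M_def using sys by (intro bop_opc X.pre_hilbert_axioms) (simp_all add: is_system_def)
  have G: "bop X Y (opc Y N z C \<circ> M ^^ n)" for n
    using sys by (intro bop_comp[OF X.pre_hilbert_axioms X.pre_hilbert_axioms Y.pre_hilbert_axioms
        bop_funpow[OF X.pre_hilbert_axioms M]] bop_opc X.pre_hilbert_axioms Y.pre_hilbert_axioms)
      (simp_all add: is_system_def)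
  have bop_B: "\<And>k. k < N \<Longrightarrow> bop U X (B k)" using sys by (simp add: is_system_def)
  have "\<And>k. k < N \<Longrightarrow> B k u \<in> hcarrier X" using u by (simp add: bop_closed[OF bop_B])
  then have b: "b \<in> hcarrier X" unfolding b_def by (rule X.opc_closed)
  obtain CM where CM: "CM \<ge> 0" "\<And>x. x \<in> hcarrier X \<Longrightarrow> hnorm X (M x) \<le> CM * hnorm X x"
    using bop_bound[OF M X.pre_hilbert_axioms] by blast
  obtain CG where CG: "CG \<ge> 0"
    "\<And>x. x \<in> hcarrier X \<Longrightarrow> hnorm Y (opc Y N z C ((M ^^ (m - 1)) x)) \<le> CG * hnorm X x"
    using bop_bound[OF G[of "m - 1"] X.pre_hilbert_axioms] by auto
  obtain \<delta> where \<delta>: "\<delta> > 0"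
    and ray: "\<And>t. 0 < t \<Longrightarrow> t < \<delta> \<Longrightarrow>
      bij_betw (resolvent_op X N (\<lambda>k. of_real t * z k) A) (hcarrier X) (hcarrier X) \<and>
      \<theta> (\<lambda>k. of_real t * z k) u = transfer_fun N A B C D X Y (\<lambda>k. of_real t * z k) u \<and>
      t * CM \<le> 1 / 2"
    using transfer_coincides_on_ray[OF tc u CM(1)] by blast
  show ?thesis
  proof (rule Y.eq_by_inner)
    fix w assume w: "w \<in> hcarrier Y"
    define x where "x t = inv_into (hcarrier X) (resolvent_op X N (\<lambda>k. of_real t * z k) A)
      (opc X N (\<lambda>k. of_real t * z k) B u)" for t
    have expansion: "x t \<in> hcarrier X" "hnorm X (x t) \<le> 2 * t * hnorm X b"
      "hinner Y (transfer_fun N A B C D X Y (\<lambda>k. of_real t * z k) u) w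
        = t * hinner Y (opc Y N z D u) w
          + (\<Sum>n<K. of_real t ^ (n + 2) * hinner Y (opc Y N z C ((M ^^ n) b)) w)
          + of_real t ^ Suc K * hinner Y (opc Y N z C ((M ^^ K) (x t))) w"
      if t: "0 < t" "t < \<delta>" for t K
      using transfer_fun_ray_expansion[OF sys u w _ CM(2)[unfolded M_def], where t = t]
        ray[OF t] t
      by (simp_all add: x_def M_def b_def)
    have "hinner Y (\<theta> z u) w = hinner Y (opc Y N z C ((M ^^ (m - 2)) b)) w"
    proof (rule leading_coeff_eq_if_expansion[OF m \<delta>,
          where g = "\<lambda>n. hinner Y (opc Y N z C ((M ^^ n) b)) w"
            and r = "\<lambda>t. hinner Y (opc Y N z C ((M ^^ (m - 1)) (x t))) w"
            and K = "CG * (2 * hnorm X b) * hnorm Y w"])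
      fix t assume t: "0 < t" "t < \<delta>"
      show "of_real t ^ m * hinner Y (\<theta> z u) w
          = of_real t * hinner Y (opc Y N z D u) w
            + (\<Sum>n<m - 1. of_real t ^ (n + 2) * hinner Y (opc Y N z C ((M ^^ n) b)) w)
            + of_real t ^ m * hinner Y (opc Y N z C ((M ^^ (m - 1)) (x t))) w"
        using expansion(3)[OF t, of "m - 1"] hom[of "of_real t"] ray[OF t] \<theta>_closed w m t
        by (simp add: Y.inner_scale_left)
      have xt: "x t \<in> hcarrier X" and x_small: "hnorm X (x t) \<le> 2 * t * hnorm X b"
        using expansion(1,2)[OF t] by auto
      have "cmod (hinner Y (opc Y N z C ((M ^^ (m - 1)) (x t))) w)
          \<le> hnorm Y (opc Y N z C ((M ^^ (m - 1)) (x t))) * hnorm Y w"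
        using bop_closed[OF G xt] w by (simp add: Y.Cauchy_Schwarz)
      also have "\<dots> \<le> (CG * hnorm X (x t)) * hnorm Y w"
        by (rule mult_right_mono[OF CG(2)[OF xt] Y.norm_nonneg[OF w]])
      also have "\<dots> \<le> (CG * (2 * t * hnorm X b)) * hnorm Y w"
        by (intro mult_right_mono mult_left_mono x_small CG(1) Y.norm_nonneg[OF w])
      finally show "cmod (hinner Y (opc Y N z C ((M ^^ (m - 1)) (x t))) w)
          \<le> CG * (2 * hnorm X b) * hnorm Y w * t"
        by (simp add: mult_ac)
    qed
    then show "hinner Y (\<theta> z u) w
        = hinner Y (opc Y N z C ((opc X N z A ^^ (m - 2)) (opc X N z B u))) w"
      by (simp add: M_def b_def)
  qed (use \<theta>_closed bop_closed[OF G b] in \<open>simp_all add: M_def b_def\<close>)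
qed

theorem mainTheorem2:
  fixes U :: "'u hspace" and Y :: "'y hspace" and N m :: nat
    and \<theta> :: "(nat \<Rightarrow> complex) \<Rightarrow> 'u \<Rightarrow> 'y"
  assumes hU: "sep_hilbert U" and hY: "sep_hilbert Y"
    and hm: "1 \<le> m"
    and hpoly: "is_hom_poly U Y N m \<theta>"
    and hnz: "\<exists>z. \<exists>u\<in>hcarrier U. \<theta> z u \<noteq> hzero Y"
  shows
    "(m = 1 \<longrightarrow>
        (\<exists>L :: nat \<Rightarrow> 'u \<Rightarrow> 'y. (\<forall>k<N. bop U Y (L k)) \<and>
           (\<forall>z. \<forall>u\<in>hcarrier U. \<theta> z u = opc Y N z L u))) \<and>
     (1 < m \<longrightarrow>
        (\<exists>(W :: nat \<Rightarrow> (nat \<Rightarrow> 'u) hspace)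
           (L1 :: nat \<Rightarrow> (nat \<Rightarrow> 'u) \<Rightarrow> 'y)
           (Lmid :: nat \<Rightarrow> nat \<Rightarrow> (nat \<Rightarrow> 'u) \<Rightarrow> (nat \<Rightarrow> 'u))
           (Lm :: nat \<Rightarrow> 'u \<Rightarrow> (nat \<Rightarrow> 'u)).
           (\<forall>j\<in>{1..m-1}. sep_hilbert (W j)) \<and>
           (\<forall>k<N. bop (W 1) Y (L1 k)) \<and>
           (\<forall>j\<in>{2..m-1}. \<forall>k<N. bop (W j) (W (j - 1)) (Lmid j k)) \<and>
           (\<forall>k<N. bop U (W (m - 1)) (Lm k)) \<and>
           (\<forall>z. \<forall>u\<in>hcarrier U.
              \<theta> z u = opc Y N z L1 (mid_prod W N z Lmid (m - 2) (opc (W (m - 1)) N z Lm u))))) \<and>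
     (\<forall>(X :: 'x hspace) A B C D.
        1 < m \<and> is_system N A B C D X U Y \<and> transfer_coincides N A B C D X U Y \<theta> \<longrightarrow>
        (\<forall>z. \<forall>u\<in>hcarrier U.
           \<theta> z u = opc Y N z C (((opc X N z A) ^^ (m - 2)) (opc X N z B u))))"
proof -
  \<comment> \<open>\<open>hm\<close> and \<open>hnz\<close> are not needed: the cases \<open>m = 0\<close> and \<open>\<theta> = 0\<close> are covered as well.\<close>
  obtain T where T: "\<And>a. length a = N \<Longrightarrow> sum_list a = m \<Longrightarrow> bop U Y (T a)"
    and \<theta>_eq: "\<And>z u. u \<in> hcarrier U \<Longrightarrow> \<theta> z u = hpoly_eval Y N m T z u"
    using hpoly unfolding is_hom_poly_def by blast
  interpret hom_poly U Y N m T using hU hY T by unfold_locales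
  have degree_one: "\<theta> z u = opc Y N z (\<lambda>k. word_coeff [k]) u" if "m = 1" "u \<in> hcarrier U" for z u
    using \<theta>_eq[OF that(2)] hpoly_eval_degree_one[OF that] by simp
  have factorization: "\<theta> z u = opc Y N z contract_op
      (mid_prod (\<lambda>_. word_space) N z (\<lambda>_. prepend_op) (m - 2) (opc word_space N z letter_op u))"
    if "1 < m" "u \<in> hcarrier U" for z u
    using \<theta>_eq[OF that(2)] hpoly_eval_factorization[OF that] by (simp add: mid_prod_const)
  have realization: "\<theta> z u = opc Y N z C ((opc X N z A ^^ (m - 2)) (opc X N z B u))"
    if "is_system N A B C D X U Y" "transfer_coincides N A B C D X U Y \<theta>" "1 < m" "u \<in> hcarrier U"
    for X :: "'x hspace" and A B C D z u
    using that \<theta>_eq hpoly_eval_scale hpoly_eval_closed by (intro homogeneous_transfer_fun) auto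
  show ?thesis
    by (intro conjI impI allI ballI exI[of _ "\<lambda>k. word_coeff [k]"] exI[of _ "\<lambda>_. word_space"]
        exI[of _ contract_op] exI[of _ "\<lambda>_. prepend_op"] exI[of _ letter_op])
      (rule bop_word_coeff sep_hilbert_word_space bop_contract_op bop_prepend_op bop_letter_op
        degree_one factorization realization; auto)+
qed

end
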